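(* Let $\psi:C_Z\to\mathbb{R}$ be an increasing convex functional such that for every $X\in C_Z$ there exists $\varepsilon>0$ with $\lim_{z\to+\infty}\psi(X+\varepsilon(Z-z)^+)=\psi(X)$. Then $$\psi(X)=\max_{\mu\in ca^+_Z}\big(\langle X,\mu\rangle-\psi^*_{C_Z}(\mu)\big)\quad\text{for all }X\in C_Z,$$ the supremum being attained.
   Context: Fix integers $J\ge0$, $T\ge1$. $\Omega$ is a non-empty subset of $((0,\infty)\times\mathbb{R}^J)^T$ with the Euclidean metric. $Z:\Omega\to[1,\infty)$ is continuous with $\{\omega\in\Omega:Z(\omega)\le z\}$ compact for every $z\in\mathbb{R}_+$. $C_Z$ is the space of continuous $X:\Omega\to\mathbb{R}$ with $X/Z$ bounded. $ca^+_Z$ is the set of (nonnegative) Borel measures $\mu$ on $\Omega$ with $\langle Z,\mu\rangle:=\int Z\,d\mu<\infty$; $\langle X,\mu\rangle=\int X\,d\mu$. $\psi$ increasing means $\psi(X)\ge\psi(Y)$ whenever $X\ge Y$. $\psi^*_{C_Z}(\mu)=\sup_{X\in C_Z}(\langle X,\mu\rangle-\psi(X))$ for $\mu\in ca^+_Z$. *)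

theory Defs
  imports "HOL-Analysis.Analysis" "HOL-Probability.Probability"
begin

text \<open>Points of Omega live in ((0,oo) x R^J)^T, encoded as vectors indexed by a finite
  type 't (T = CARD('t)) whose entries are pairs (price, R^J-part) with R^J = real^'j.\<close>

type_synonym ('j, 't) state = "(real \<times> (real ^ 'j)) ^ 't"

definition state_space :: "('j::finite, 't::finite) state set" where
  "state_space = {\<omega>. \<forall>t. 0 < fst (\<omega> $ t)}"

definition CZ :: "'a::metric_space set \<Rightarrow> ('a \<Rightarrow> real) \<Rightarrow> ('a \<Rightarrow> real) set" where
  "CZ \<Omega> Z = {X. continuous_on \<Omega> X \<and> (\<exists>c. \<forall>\<omega>\<in>\<Omega>. \<bar>X \<omega> / Z \<omega>\<bar> \<le> c)}"

definition caZ :: "'a::metric_space set \<Rightarrow> ('a \<Rightarrow> real) \<Rightarrow> 'a measure set" where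
  "caZ \<Omega> Z = {\<mu>. sets \<mu> = sets (restrict_space borel \<Omega>) \<and>
                  (\<integral>\<^sup>+ \<omega>. ennreal (Z \<omega>) \<partial>\<mu>) < \<infinity>}"

definition pairing :: "('a \<Rightarrow> real) \<Rightarrow> 'a measure \<Rightarrow> real" where
  "pairing X \<mu> = (\<integral> \<omega>. X \<omega> \<partial>\<mu>)"

definition conj_CZ :: "'a::metric_space set \<Rightarrow> ('a \<Rightarrow> real) \<Rightarrow> (('a \<Rightarrow> real) \<Rightarrow> real)
    \<Rightarrow> 'a measure \<Rightarrow> ereal" where
  "conj_CZ \<Omega> Z \<psi> \<mu> = (SUP X\<in>CZ \<Omega> Z. ereal (pairing X \<mu> - \<psi> X))"

end

theory Submission
  imports Defs
begin

text \<open>The functional \<open>g f = \<psi> (X + f) - \<psi> X\<close> is convex with \<open>g 0 = 0\<close>; by Zorn's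
  lemma some sublinear minorant of \<open>g\<close> (the directional derivative of \<open>g\<close> at \<open>0\<close> is one) is
  minimal, and a minimal one is linear. This gives a linear \<open>q \<le> g\<close>, i.e. a subgradient of
  \<open>\<psi>\<close> at \<open>X\<close>. Monotonicity of \<open>\<psi>\<close> makes \<open>q\<close> positive, and continuity from below along
  \<open>X + \<epsilon> (Z - z)\<^sup>+\<close> gives \<open>q ((Z - z)\<^sup>+) \<rightarrow> 0\<close>.

  Such a functional is integration against a measure \<open>\<mu> \<in> ca\<^sup>+\<^sub>Z\<close>: as in the Riesz--Markov
  theorem, \<open>q\<close> defines an inner content on relatively open sets, whose outer measure is countably
  subadditive (tightness comes from the compact sublevel sets of \<open>Z\<close>) and has all Borel sets
  Caratheodory-measurable; a layer-cake estimate and truncation then identify \<open>\<integral> f d\<mu>\<close> with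
  \<open>q f\<close>. Finally the subgradient inequality says that \<open>X\<close> attains the supremum defining
  \<open>\<psi>\<^sup>*(\<mu>)\<close>, so \<open>\<psi> X = \<langle>X, \<mu>\<rangle> - \<psi>\<^sup>*(\<mu>)\<close>, while \<open>\<langle>X, \<nu>\<rangle> - \<psi>\<^sup>*(\<nu>) \<le> \<psi> X\<close> for every
  \<open>\<nu>\<close> is the Fenchel--Young inequality.\<close>

section \<open>The weighted space \<open>C\<^sub>Z\<close>\<close>

lemma CZ_continuous_on: "X \<in> CZ \<Omega> Z \<Longrightarrow> continuous_on \<Omega> X"
  unfolding CZ_def by auto

lemma CZ_memI:
  assumes "continuous_on \<Omega> X" "\<And>x. x \<in> \<Omega> \<Longrightarrow> 0 < Z x" "\<And>x. x \<in> \<Omega> \<Longrightarrow> \<bar>X x\<bar> \<le> c * Z x"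
  shows "X \<in> CZ \<Omega> Z"
  unfolding CZ_def
proof (intro CollectI conjI exI ballI)
  fix x assume x: "x \<in> \<Omega>"
  then show "\<bar>X x / Z x\<bar> \<le> c"
    using assms(2,3)[OF x] by (simp add: abs_div abs_of_pos divide_le_eq)
qed fact

lemma CZ_boundE:
  assumes "X \<in> CZ \<Omega> Z" "\<And>x. x \<in> \<Omega> \<Longrightarrow> 0 < Z x"
  obtains c where "0 < c" "\<And>x. x \<in> \<Omega> \<Longrightarrow> \<bar>X x\<bar> \<le> c * Z x"
proof -
  obtain c where c: "\<And>x. x \<in> \<Omega> \<Longrightarrow> \<bar>X x / Z x\<bar> \<le> c"
    using assms(1) unfolding CZ_def by auto
  have "\<bar>X x\<bar> \<le> max c 1 * Z x" if "x \<in> \<Omega>" for x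
  proof -
    have "\<bar>X x\<bar> \<le> c * Z x"
      using c[OF that] assms(2)[OF that] by (simp add: abs_div abs_of_pos divide_le_eq)
    also have "\<dots> \<le> max c 1 * Z x" using assms(2)[OF that] by (intro mult_right_mono) auto
    finally show ?thesis .
  qed
  then show ?thesis using that[of "max c 1"] by auto
qed

text \<open>No assumption on \<open>Z\<close> is needed for closure under the vector space operations,
  since \<open>CZ\<close> bounds the quotient \<open>X / Z\<close>, which is \<open>0\<close> where \<open>Z\<close> vanishes.\<close>

lemma CZ_add:
  assumes "f \<in> CZ \<Omega> Z" "g \<in> CZ \<Omega> Z" shows "(\<lambda>x. f x + g x) \<in> CZ \<Omega> Z"
proof -
  obtain a b where "\<And>x. x \<in> \<Omega> \<Longrightarrow> \<bar>f x / Z x\<bar> \<le> a" "\<And>x. x \<in> \<Omega> \<Longrightarrow> \<bar>g x / Z x\<bar> \<le> b"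
    using assms unfolding CZ_def by blast
  then have "\<bar>(f x + g x) / Z x\<bar> \<le> a + b" if "x \<in> \<Omega>" for x
    using abs_triangle_ineq[of "f x / Z x" "g x / Z x"] that by (fastforce simp: add_divide_distrib)
  then show ?thesis using assms unfolding CZ_def by (auto intro!: continuous_intros)
qed

lemma CZ_cmult:
  assumes "f \<in> CZ \<Omega> Z" shows "(\<lambda>x. c * f x) \<in> CZ \<Omega> Z"
proof -
  obtain a where "\<And>x. x \<in> \<Omega> \<Longrightarrow> \<bar>f x / Z x\<bar> \<le> a"
    using assms unfolding CZ_def by blast
  then have "\<bar>c * f x / Z x\<bar> \<le> \<bar>c\<bar> * a" if "x \<in> \<Omega>" for x
    using that by (simp add: abs_mult times_divide_eq_right[symmetric] mult_left_mono del: times_divide_eq_right)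
  then show ?thesis using assms unfolding CZ_def by (auto intro!: continuous_intros)
qed

lemma CZ_uminus: "f \<in> CZ \<Omega> Z \<Longrightarrow> (\<lambda>x. - f x) \<in> CZ \<Omega> Z"
  using CZ_cmult[of f \<Omega> Z "-1"] by simp

lemma CZ_diff: "f \<in> CZ \<Omega> Z \<Longrightarrow> g \<in> CZ \<Omega> Z \<Longrightarrow> (\<lambda>x. f x - g x) \<in> CZ \<Omega> Z"
  using CZ_add[OF _ CZ_uminus] by simp

lemma CZ_zero: "(\<lambda>x. 0) \<in> CZ \<Omega> Z"
  unfolding CZ_def by auto

lemma CZ_sum: "(\<And>i. i \<in> I \<Longrightarrow> g i \<in> CZ \<Omega> Z) \<Longrightarrow> (\<lambda>x. \<Sum>i\<in>I. g i x) \<in> CZ \<Omega> Z"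
proof (induction I rule: infinite_finite_induct)
  case (insert a F) then show ?case using CZ_add[of "g a" \<Omega> Z "\<lambda>x. \<Sum>i\<in>F. g i x"] by simp
qed (auto intro: CZ_zero)

lemma CZ_max:
  assumes "f \<in> CZ \<Omega> Z" "g \<in> CZ \<Omega> Z" shows "(\<lambda>x. max (f x) (g x)) \<in> CZ \<Omega> Z"
proof -
  obtain a b where a: "\<And>x. x \<in> \<Omega> \<Longrightarrow> \<bar>f x / Z x\<bar> \<le> a"
    and b: "\<And>x. x \<in> \<Omega> \<Longrightarrow> \<bar>g x / Z x\<bar> \<le> b"
    using assms unfolding CZ_def by blast
  have "\<bar>max (f x) (g x) / Z x\<bar> \<le> max a b" if "x \<in> \<Omega>" for x
    using a[OF that] b[OF that] by (simp add: max_def)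
  then show ?thesis using assms unfolding CZ_def by (auto intro!: continuous_intros)
qed

lemma CZ_min:
  assumes "f \<in> CZ \<Omega> Z" "g \<in> CZ \<Omega> Z" shows "(\<lambda>x. min (f x) (g x)) \<in> CZ \<Omega> Z"
proof -
  have "(\<lambda>x. - max (- f x) (- g x)) \<in> CZ \<Omega> Z" using assms by (intro CZ_uminus CZ_max)
  moreover have "(\<lambda>x. - max (- f x) (- g x)) = (\<lambda>x. min (f x) (g x))"
    by (auto simp: fun_eq_iff min_def max_def)
  ultimately show ?thesis by simp
qed

lemma CZ_weight: "continuous_on \<Omega> Z \<Longrightarrow> Z \<in> CZ \<Omega> Z"
  unfolding CZ_def by (auto intro!: exI[of _ 1])

lemma CZ_bounded:
  assumes "continuous_on \<Omega> X" "\<And>x. x \<in> \<Omega> \<Longrightarrow> 1 \<le> Z x" "\<And>x. x \<in> \<Omega> \<Longrightarrow> \<bar>X x\<bar> \<le> c"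
  shows "X \<in> CZ \<Omega> Z"
proof (rule CZ_memI[OF assms(1), of _ "\<bar>c\<bar>"])
  fix x assume x: "x \<in> \<Omega>"
  show "0 < Z x" using assms(2)[OF x] by simp
  have "\<bar>X x\<bar> \<le> \<bar>c\<bar>" using assms(3)[OF x] by simp
  also have "\<dots> \<le> \<bar>c\<bar> * Z x" using mult_left_mono[OF assms(2)[OF x], of "\<bar>c\<bar>"] by simp
  finally show "\<bar>X x\<bar> \<le> \<bar>c\<bar> * Z x" .
qed

lemma CZ_const: "(\<And>x. x \<in> \<Omega> \<Longrightarrow> 1 \<le> Z x) \<Longrightarrow> (\<lambda>x. c) \<in> CZ \<Omega> Z"
  by (rule CZ_bounded[of _ _ _ "\<bar>c\<bar>"]) auto

section \<open>Linear minorants of convex functionals\<close>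

locale function_space =
  fixes V :: "('a \<Rightarrow> real) set"
  assumes add_mem: "\<And>f h. f \<in> V \<Longrightarrow> h \<in> V \<Longrightarrow> (\<lambda>x. f x + h x) \<in> V"
    and cmult_mem: "\<And>f c. f \<in> V \<Longrightarrow> (\<lambda>x. c * f x) \<in> V"
    and zero_mem: "(\<lambda>x. 0) \<in> V"
begin

lemma uminus_mem: "f \<in> V \<Longrightarrow> (\<lambda>x. - f x) \<in> V"
  using cmult_mem[of f "-1"] by simp

definition sublinear :: "(('a \<Rightarrow> real) \<Rightarrow> real) \<Rightarrow> bool" where
  "sublinear q \<longleftrightarrow> (\<forall>f\<in>V. \<forall>a>0. q (\<lambda>x. a * f x) \<le> a * q f)
                   \<and> (\<forall>f\<in>V. \<forall>h\<in>V. q (\<lambda>x. f x + h x) \<le> q f + q h)"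

lemma sublinearI:
  assumes "\<And>f a. f \<in> V \<Longrightarrow> 0 < a \<Longrightarrow> q (\<lambda>x. a * f x) \<le> a * q f"
    and "\<And>f h. f \<in> V \<Longrightarrow> h \<in> V \<Longrightarrow> q (\<lambda>x. f x + h x) \<le> q f + q h"
  shows "sublinear q"
  using assms unfolding sublinear_def by blast

lemma sublinear_cmult_le: "sublinear q \<Longrightarrow> f \<in> V \<Longrightarrow> 0 < a \<Longrightarrow> q (\<lambda>x. a * f x) \<le> a * q f"
  unfolding sublinear_def by blast

lemma sublinear_add_le: "sublinear q \<Longrightarrow> f \<in> V \<Longrightarrow> h \<in> V \<Longrightarrow> q (\<lambda>x. f x + h x) \<le> q f + q h"
  unfolding sublinear_def by blast

lemma sublinear_zero: assumes "sublinear q" shows "q (\<lambda>x. 0) = 0"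
proof -
  have "q (\<lambda>x. 0) \<le> q (\<lambda>x. 0) + q (\<lambda>x. 0)" using sublinear_add_le[OF assms zero_mem zero_mem] by simp
  moreover have "q (\<lambda>x. 0) \<le> (1/2) * q (\<lambda>x. 0)" using sublinear_cmult_le[OF assms zero_mem, of "1/2"] by simp
  ultimately show ?thesis by simp
qed

lemma sublinear_cmult:
  assumes q: "sublinear q" and f: "f \<in> V" and t: "0 \<le> t" shows "q (\<lambda>x. t * f x) = t * q f"
proof (cases "t = 0")
  case True then show ?thesis using sublinear_zero[OF q] by simp
next
  case False
  then have t: "0 < t" using t by simp
  have "q f = q (\<lambda>x. (1/t) * (t * f x))" using t by simp
  also have "\<dots> \<le> (1/t) * q (\<lambda>x. t * f x)" by (rule sublinear_cmult_le[OF q cmult_mem[OF f]]) (use t in simp)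
  finally have "t * q f \<le> q (\<lambda>x. t * f x)" using t by (simp add: field_simps)
  then show ?thesis using sublinear_cmult_le[OF q f t] by simp
qed

lemma sublinear_uminus_ge: assumes q: "sublinear q" and f: "f \<in> V" shows "- q (\<lambda>x. - f x) \<le> q f"
  using sublinear_add_le[OF q f uminus_mem[OF f]] sublinear_zero[OF q] by simp

lemma sublinear_linearI:
  assumes q: "sublinear q" and uminus: "\<And>y. y \<in> V \<Longrightarrow> q (\<lambda>x. - y x) \<le> - q y"
  shows "\<And>f h. f \<in> V \<Longrightarrow> h \<in> V \<Longrightarrow> q (\<lambda>x. f x + h x) = q f + q h"
    and "\<And>f c. f \<in> V \<Longrightarrow> q (\<lambda>x. c * f x) = c * q f"
proof -
  have neg: "q (\<lambda>x. - y x) = - q y" if y: "y \<in> V" for y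
    using uminus[OF y] sublinear_uminus_ge[OF q y] by simp
  show "q (\<lambda>x. f x + h x) = q f + q h" if f: "f \<in> V" and h: "h \<in> V" for f h
  proof -
    have "q f = q (\<lambda>x. (f x + h x) + - h x)" by simp
    also have "\<dots> \<le> q (\<lambda>x. f x + h x) + q (\<lambda>x. - h x)"
      by (rule sublinear_add_le[OF q add_mem[OF f h] uminus_mem[OF h]])
    finally show ?thesis using neg[OF h] sublinear_add_le[OF q f h] by simp
  qed
  show "q (\<lambda>x. c * f x) = c * q f" if f: "f \<in> V" for f c
  proof (cases "0 \<le> c")
    case True then show ?thesis by (rule sublinear_cmult[OF q f])
  next
    case False
    have "q (\<lambda>x. c * f x) = - q (\<lambda>x. (- c) * f x)" using neg[OF cmult_mem[OF f, of "- c"]] by simp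
    also have "\<dots> = c * q f" using sublinear_cmult[OF q f, of "- c"] False by simp
    finally show ?thesis .
  qed
qed

definition convex_functional :: "(('a \<Rightarrow> real) \<Rightarrow> real) \<Rightarrow> bool" where
  "convex_functional g \<longleftrightarrow> (\<forall>f\<in>V. \<forall>h\<in>V. \<forall>l. 0 \<le> l \<and> l \<le> 1 \<longrightarrow>
      g (\<lambda>x. l * f x + (1 - l) * h x) \<le> l * g f + (1 - l) * g h)"

lemma convex_functionalD:
  "convex_functional g \<Longrightarrow> f \<in> V \<Longrightarrow> h \<in> V \<Longrightarrow> 0 \<le> l \<Longrightarrow> l \<le> 1 \<Longrightarrow>
    g (\<lambda>x. l * f x + (1 - l) * h x) \<le> l * g f + (1 - l) * g h"
  unfolding convex_functional_def by blast

text \<open>Values off \<open>V\<close> are normalised to \<open>0\<close>, so that pointwise comparison on \<open>V\<close> is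
  antisymmetric on this set.\<close>

definition sublinear_minorants :: "(('a \<Rightarrow> real) \<Rightarrow> real) \<Rightarrow> (('a \<Rightarrow> real) \<Rightarrow> real) set" where
  "sublinear_minorants g = {q. sublinear q \<and> (\<forall>f\<in>V. q f \<le> g f) \<and> (\<forall>f. f \<notin> V \<longrightarrow> q f = 0)}"

definition le_on :: "(('a \<Rightarrow> real) \<Rightarrow> real) \<Rightarrow> (('a \<Rightarrow> real) \<Rightarrow> real) \<Rightarrow> bool" where
  "le_on q r \<longleftrightarrow> (\<forall>f\<in>V. q f \<le> r f)"

lemma sublinear_minorantsI:
  "sublinear q \<Longrightarrow> (\<And>f. f \<in> V \<Longrightarrow> q f \<le> g f) \<Longrightarrow> (\<And>f. f \<notin> V \<Longrightarrow> q f = 0) \<Longrightarrow>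
    q \<in> sublinear_minorants g"
  unfolding sublinear_minorants_def by blast

lemma sublinear_minorantsD:
  "q \<in> sublinear_minorants g \<Longrightarrow> sublinear q"
  "q \<in> sublinear_minorants g \<Longrightarrow> f \<in> V \<Longrightarrow> q f \<le> g f"
  unfolding sublinear_minorants_def by blast+

lemma sublinear_minorants_lower:
  assumes "q \<in> sublinear_minorants g" "f \<in> V" shows "- g (\<lambda>x. - f x) \<le> q f"
  using sublinear_minorantsD[OF assms(1)] sublinear_uminus_ge[of q f] assms(2) uminus_mem
  by fastforce

lemma convex_functional_slope_lower:
  assumes g: "convex_functional g" and g0: "g (\<lambda>x. 0) = 0" and f: "f \<in> V" and t: "0 < t"
  shows "- g (\<lambda>x. - f x) \<le> g (\<lambda>x. t * f x) / t"
proof -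
  define l where "l = 1 / (1 + t)"
  have l: "0 \<le> l" "l \<le> 1" and l1: "1 - l = t / (1 + t)" using t by (auto simp: l_def field_simps)
  have "(\<lambda>x. l * (t * f x) + (1 - l) * (- f x)) = (\<lambda>x. 0)"
    using t by (auto simp: l_def fun_eq_iff field_simps)
  then have "0 \<le> l * g (\<lambda>x. t * f x) + (1 - l) * g (\<lambda>x. - f x)"
    using convex_functionalD[OF g cmult_mem[OF f, of t] uminus_mem[OF f] l] g0 by metis
  also have "\<dots> = (g (\<lambda>x. t * f x) + t * g (\<lambda>x. - f x)) / (1 + t)"
    unfolding l1 by (simp add: l_def add_divide_distrib)
  finally show ?thesis using t by (simp add: zero_le_divide_iff le_divide_eq algebra_simps)
qed

text \<open>For \<open>t = s u / (s + u)\<close>, \<open>t (f + h)\<close> is a convex combination of \<open>s f\<close> and \<open>u h\<close>.\<close>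

lemma convex_functional_slope_add:
  assumes g: "convex_functional g" and f: "f \<in> V" and h: "h \<in> V" and s: "0 < s" and u: "0 < u"
  shows "g (\<lambda>x. (s * u / (s + u)) * (f x + h x)) / (s * u / (s + u))
           \<le> g (\<lambda>x. s * f x) / s + g (\<lambda>x. u * h x) / u"
proof -
  define t where "t = s * u / (s + u)"
  define l where "l = u / (s + u)"
  have t: "0 < t" using s u by (simp add: t_def)
  have l: "0 \<le> l" "l \<le> 1" using s u by (auto simp: l_def)
  have e1: "l * s = t" and e2: "(1 - l) * u = t" using s u by (simp_all add: l_def t_def field_simps)
  have "(\<lambda>x. l * (s * f x) + (1 - l) * (u * h x)) = (\<lambda>x. t * (f x + h x))"
    by (auto simp: fun_eq_iff distrib_left mult.assoc[symmetric] e1 e2)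
  then have "g (\<lambda>x. t * (f x + h x)) \<le> l * g (\<lambda>x. s * f x) + (1 - l) * g (\<lambda>x. u * h x)"
    using convex_functionalD[OF g cmult_mem[OF f, of s] cmult_mem[OF h, of u] l] by simp
  then have "g (\<lambda>x. t * (f x + h x)) / t \<le> (l * g (\<lambda>x. s * f x) + (1 - l) * g (\<lambda>x. u * h x)) / t"
    using t by (intro divide_right_mono) auto
  also have "\<dots> = (l / t) * g (\<lambda>x. s * f x) + ((1 - l) / t) * g (\<lambda>x. u * h x)"
    by (simp add: add_divide_distrib)
  also have "\<dots> = g (\<lambda>x. s * f x) / s + g (\<lambda>x. u * h x) / u"
  proof -
    have "l / t = 1 / s" "(1 - l) / t = 1 / u" using e1 e2 s u t by (auto simp: field_simps)
    then show ?thesis by simp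
  qed
  finally show ?thesis unfolding t_def .
qed

lemma chain_Inf_sublinear_minorant:
  assumes C: "C \<noteq> {}" "C \<subseteq> sublinear_minorants g"
    and chain: "\<And>a b. a \<in> C \<Longrightarrow> b \<in> C \<Longrightarrow> le_on a b \<or> le_on b a"
  shows "\<exists>m\<in>sublinear_minorants g. \<forall>q\<in>C. le_on m q"
proof -
  define m where "m f = (if f \<in> V then (INF q\<in>C. q f) else 0)" for f
  have m_le: "m f \<le> q f" if "f \<in> V" "q \<in> C" for f q
    unfolding m_def using that C(2) sublinear_minorants_lower
    by (auto intro!: cINF_lower bdd_belowI2[of _ "- g (\<lambda>x. - f x)"])
  have m_ge: "M \<le> m f" if "f \<in> V" "\<And>q. q \<in> C \<Longrightarrow> M \<le> q f" for f M
    unfolding m_def using that C(1) by (auto intro!: cINF_greatest)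
  have sub: "sublinear q" if "q \<in> C" for q
    using that C(2) sublinear_minorantsD(1) by blast
  obtain q0 where q0: "q0 \<in> C" using C(1) by blast
  have "m \<in> sublinear_minorants g"
  proof (rule sublinear_minorantsI[OF sublinearI])
    fix f a assume f: "f \<in> V" and a: "(0::real) < a"
    have "m (\<lambda>x. a * f x) / a \<le> m f"
    proof (rule m_ge[OF f])
      fix q assume q: "q \<in> C"
      have "m (\<lambda>x. a * f x) \<le> a * q f"
        using m_le[OF cmult_mem[OF f, of a] q] sublinear_cmult_le[OF sub[OF q] f a] by simp
      then show "m (\<lambda>x. a * f x) / a \<le> q f" using a by (simp add: divide_le_eq mult.commute)
    qed
    then show "m (\<lambda>x. a * f x) \<le> a * m f" using a by (simp add: divide_le_eq mult.commute)
  next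
    fix f h assume f: "f \<in> V" and h: "h \<in> V"
    have "m (\<lambda>x. f x + h x) \<le> q1 f + q2 h" if q1: "q1 \<in> C" and q2: "q2 \<in> C" for q1 q2
    proof -
      \<comment> \<open>use whichever of the two comparable functionals is smaller\<close>
      obtain q where q: "q \<in> C" "q f \<le> q1 f" "q h \<le> q2 h"
        using chain[OF q1 q2] f h q1 q2 unfolding le_on_def by fastforce
      show ?thesis using m_le[OF add_mem[OF f h] q(1)] sublinear_add_le[OF sub[OF q(1)] f h] q(2,3)
        by simp
    qed
    then have "m (\<lambda>x. f x + h x) - m f \<le> q2 h" if "q2 \<in> C" for q2
      using m_ge[OF f, of "m (\<lambda>x. f x + h x) - q2 h"] that by force
    then have "m (\<lambda>x. f x + h x) - m f \<le> m h" by (intro m_ge[OF h])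
    then show "m (\<lambda>x. f x + h x) \<le> m f + m h" by simp
  next
    show "m f \<le> g f" if "f \<in> V" for f
      using m_le[OF that q0] sublinear_minorantsD(2)[of q0 g f] C(2) q0 that by fastforce
  qed (simp add: m_def)
  then show ?thesis using m_le unfolding le_on_def by blast
qed

lemma exists_minimal_sublinear_minorant:
  assumes "sublinear_minorants g \<noteq> {}"
  shows "\<exists>q\<in>sublinear_minorants g. \<forall>r\<in>sublinear_minorants g. le_on r q \<longrightarrow> r = q"
proof (rule predicate_Zorn[where P = "\<lambda>q r. le_on r q"])
  show "partial_order_on (sublinear_minorants g) (relation_of (\<lambda>q r. le_on r q) (sublinear_minorants g))"
  proof (rule partial_order_on_relation_ofI)
    fix a b assume ab: "a \<in> sublinear_minorants g" "b \<in> sublinear_minorants g" "le_on b a" "le_on a b"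
    show "a = b"
    proof
      fix f show "a f = b f"
        using ab unfolding sublinear_minorants_def le_on_def by (cases "f \<in> V") (auto intro: antisym)
    qed
  qed (auto simp: le_on_def intro: order_trans)
next
  fix C assume C: "C \<in> Chains (relation_of (\<lambda>q r. le_on r q) (sublinear_minorants g))"
  then have sub: "C \<subseteq> sublinear_minorants g" and chain: "\<And>a b. a \<in> C \<Longrightarrow> b \<in> C \<Longrightarrow> le_on a b \<or> le_on b a"
    unfolding Chains_def relation_of_def by blast+
  show "\<exists>u\<in>sublinear_minorants g. \<forall>q\<in>C. le_on u q"
    using assms chain_Inf_sublinear_minorant[OF _ sub chain] by (cases "C = {}") auto
qed

definition ray_inf :: "(('a \<Rightarrow> real) \<Rightarrow> real) \<Rightarrow> ('a \<Rightarrow> real) \<Rightarrow> ('a \<Rightarrow> real) \<Rightarrow> real" where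
  "ray_inf q y f = (if f \<in> V then (INF t\<in>{0..}. q (\<lambda>x. f x + t * y x) - t * q y) else 0)"

context
  fixes q y assumes q: "sublinear q" and y: "y \<in> V"
begin

lemma ray_inf_le: "f \<in> V \<Longrightarrow> 0 \<le> t \<Longrightarrow> ray_inf q y f \<le> q (\<lambda>x. f x + t * y x) - t * q y"
proof -
  assume f: "f \<in> V"
  have "- q (\<lambda>x. - f x) \<le> q (\<lambda>x. f x + t * y x) - t * q y" if t: "0 \<le> t" for t
  proof -
    have "q (\<lambda>x. (f x + t * y x) + - f x) \<le> q (\<lambda>x. f x + t * y x) + q (\<lambda>x. - f x)"
      by (rule sublinear_add_le[OF q add_mem[OF f cmult_mem[OF y]] uminus_mem[OF f]])
    then show ?thesis using sublinear_cmult[OF q y t] by simp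
  qed
  then show "0 \<le> t \<Longrightarrow> ray_inf q y f \<le> q (\<lambda>x. f x + t * y x) - t * q y"
    unfolding ray_inf_def using f by (auto intro!: cINF_lower bdd_belowI2[of _ "- q (\<lambda>x. - f x)"])
qed

lemma ray_inf_ge:
  "f \<in> V \<Longrightarrow> (\<And>t. 0 \<le> t \<Longrightarrow> M \<le> q (\<lambda>x. f x + t * y x) - t * q y) \<Longrightarrow> M \<le> ray_inf q y f"
  unfolding ray_inf_def by (auto intro!: cINF_greatest)

lemma ray_inf_sublinear: "sublinear (ray_inf q y)"
proof (rule sublinearI)
  fix f a assume f: "f \<in> V" and a: "(0::real) < a"
  have "ray_inf q y (\<lambda>x. a * f x) / a \<le> ray_inf q y f"
  proof (rule ray_inf_ge[OF f])
    fix t :: real assume t: "0 \<le> t"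
    have "(\<lambda>x. a * f x + (a * t) * y x) = (\<lambda>x. a * (f x + t * y x))" by (auto simp: fun_eq_iff algebra_simps)
    then have "ray_inf q y (\<lambda>x. a * f x) \<le> a * q (\<lambda>x. f x + t * y x) - (a * t) * q y"
      using ray_inf_le[OF cmult_mem[OF f], of "a * t" a] sublinear_cmult[OF q add_mem[OF f cmult_mem[OF y]], of a]
        a t by simp
    also have "\<dots> = a * (q (\<lambda>x. f x + t * y x) - t * q y)" by (simp add: algebra_simps)
    finally show "ray_inf q y (\<lambda>x. a * f x) / a \<le> q (\<lambda>x. f x + t * y x) - t * q y"
      using a by (simp add: divide_le_eq mult.commute)
  qed
  then show "ray_inf q y (\<lambda>x. a * f x) \<le> a * ray_inf q y f" using a by (simp add: divide_le_eq mult.commute)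
next
  fix f h assume f: "f \<in> V" and h: "h \<in> V"
  have key: "ray_inf q y (\<lambda>x. f x + h x)
      \<le> (q (\<lambda>x. f x + t1 * y x) - t1 * q y) + (q (\<lambda>x. h x + t2 * y x) - t2 * q y)"
    if t1: "0 \<le> t1" and t2: "0 \<le> t2" for t1 t2
  proof -
    have "(\<lambda>x. (f x + h x) + (t1 + t2) * y x) = (\<lambda>x. (f x + t1 * y x) + (h x + t2 * y x))"
      by (auto simp: fun_eq_iff algebra_simps)
    then show ?thesis
      using ray_inf_le[OF add_mem[OF f h], of "t1 + t2"] t1 t2
        sublinear_add_le[OF q add_mem[OF f cmult_mem[OF y]] add_mem[OF h cmult_mem[OF y]], of t1 t2]
      by (simp add: algebra_simps)
  qed
  have "ray_inf q y (\<lambda>x. f x + h x) - ray_inf q y f \<le> q (\<lambda>x. h x + t2 * y x) - t2 * q y"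
    if t2: "0 \<le> t2" for t2
    using ray_inf_ge[OF f, of "ray_inf q y (\<lambda>x. f x + h x) - (q (\<lambda>x. h x + t2 * y x) - t2 * q y)"]
      key t2 by force
  then have "ray_inf q y (\<lambda>x. f x + h x) - ray_inf q y f \<le> ray_inf q y h" by (intro ray_inf_ge[OF h])
  then show "ray_inf q y (\<lambda>x. f x + h x) \<le> ray_inf q y f + ray_inf q y h" by simp
qed

lemma ray_inf_le_on: "le_on (ray_inf q y) q"
  unfolding le_on_def using ray_inf_le[of _ 0] by simp

lemma ray_inf_uminus: "ray_inf q y (\<lambda>x. - y x) \<le> - q y"
  using ray_inf_le[OF uminus_mem[OF y], of 1] sublinear_zero[OF q] by simp

end

text \<open>\<open>ray_inf q y\<close> is a sublinear minorant below \<open>q\<close> taking a value \<open>\<le> - q y\<close> at \<open>- y\<close>,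
  so minimality of \<open>q\<close> forces \<open>q (- y) \<le> - q y\<close>.\<close>

lemma minimal_sublinear_minorant_linear:
  assumes q: "q \<in> sublinear_minorants g"
    and min: "\<And>r. r \<in> sublinear_minorants g \<Longrightarrow> le_on r q \<Longrightarrow> r = q"
  shows "\<And>f h. f \<in> V \<Longrightarrow> h \<in> V \<Longrightarrow> q (\<lambda>x. f x + h x) = q f + q h"
    and "\<And>f c. f \<in> V \<Longrightarrow> q (\<lambda>x. c * f x) = c * q f"
proof -
  have sub: "sublinear q" using sublinear_minorantsD(1)[OF q] .
  have "q (\<lambda>x. - y x) \<le> - q y" if y: "y \<in> V" for y
  proof -
    have "ray_inf q y \<in> sublinear_minorants g"
    proof (rule sublinear_minorantsI[OF ray_inf_sublinear[OF sub y]])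
      show "ray_inf q y f \<le> g f" if "f \<in> V" for f
        using ray_inf_le_on[OF sub y] sublinear_minorantsD(2)[OF q that] that unfolding le_on_def by force
    qed (simp add: ray_inf_def)
    then have "ray_inf q y = q" using min ray_inf_le_on[OF sub y] by blast
    then show ?thesis using ray_inf_uminus[OF sub y] by simp
  qed
  then show "\<And>f h. f \<in> V \<Longrightarrow> h \<in> V \<Longrightarrow> q (\<lambda>x. f x + h x) = q f + q h"
    and "\<And>f c. f \<in> V \<Longrightarrow> q (\<lambda>x. c * f x) = c * q f"
    using sublinear_linearI[OF sub] by blast+
qed

context
  fixes g assumes g: "convex_functional g" and g0: "g (\<lambda>x. 0) = 0"
begin

text \<open>Since \<open>t \<mapsto> g (t f) / t\<close> is nondecreasing, this is the directional derivative of \<open>g\<close>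
  at \<open>0\<close> in direction \<open>f\<close>.\<close>

definition dir_deriv :: "('a \<Rightarrow> real) \<Rightarrow> real" where
  "dir_deriv f = (if f \<in> V then (INF t\<in>{0<..}. g (\<lambda>x. t * f x) / t) else 0)"

lemma dir_deriv_le: "f \<in> V \<Longrightarrow> 0 < t \<Longrightarrow> dir_deriv f \<le> g (\<lambda>x. t * f x) / t"
  unfolding dir_deriv_def
  by (auto intro!: cINF_lower bdd_belowI2[of _ "- g (\<lambda>x. - f x)"] convex_functional_slope_lower[OF g g0])

lemma dir_deriv_ge: "f \<in> V \<Longrightarrow> (\<And>t. 0 < t \<Longrightarrow> m \<le> g (\<lambda>x. t * f x) / t) \<Longrightarrow> m \<le> dir_deriv f"
  unfolding dir_deriv_def by (auto intro!: cINF_greatest)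

lemma dir_deriv_sublinear_minorant: "dir_deriv \<in> sublinear_minorants g"
proof (rule sublinear_minorantsI[OF sublinearI])
  fix f a assume f: "f \<in> V" and a: "(0::real) < a"
  have "dir_deriv (\<lambda>x. a * f x) / a \<le> dir_deriv f"
  proof (rule dir_deriv_ge[OF f])
    fix t :: real assume t: "0 < t"
    have "dir_deriv (\<lambda>x. a * f x) \<le> g (\<lambda>x. (t / a) * (a * f x)) / (t / a)"
      using t a by (intro dir_deriv_le cmult_mem f) auto
    then show "dir_deriv (\<lambda>x. a * f x) / a \<le> g (\<lambda>x. t * f x) / t" using a t by (simp add: field_simps)
  qed
  then show "dir_deriv (\<lambda>x. a * f x) \<le> a * dir_deriv f" using a by (simp add: divide_le_eq mult.commute)
next
  fix f h assume f: "f \<in> V" and h: "h \<in> V"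
  have "dir_deriv (\<lambda>x. f x + h x) - g (\<lambda>x. u * h x) / u \<le> dir_deriv f" if u: "0 < u" for u
  proof (rule dir_deriv_ge[OF f])
    fix s :: real assume s: "0 < s"
    have "dir_deriv (\<lambda>x. f x + h x) \<le> g (\<lambda>x. s * f x) / s + g (\<lambda>x. u * h x) / u"
      using dir_deriv_le[OF add_mem[OF f h], of "s * u / (s + u)"] s u
        convex_functional_slope_add[OF g f h s u] by simp
    then show "dir_deriv (\<lambda>x. f x + h x) - g (\<lambda>x. u * h x) / u \<le> g (\<lambda>x. s * f x) / s" by simp
  qed
  then have "dir_deriv (\<lambda>x. f x + h x) - dir_deriv f \<le> dir_deriv h"
    by (intro dir_deriv_ge[OF h]) (auto simp: algebra_simps)
  then show "dir_deriv (\<lambda>x. f x + h x) \<le> dir_deriv f + dir_deriv h" by simp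
next
  show "dir_deriv f \<le> g f" if "f \<in> V" for f using dir_deriv_le[OF that, of 1] by simp
qed (simp add: dir_deriv_def)

theorem exists_linear_minorant:
  obtains q where "\<And>f h. f \<in> V \<Longrightarrow> h \<in> V \<Longrightarrow> q (\<lambda>x. f x + h x) = q f + q h"
    and "\<And>f c. f \<in> V \<Longrightarrow> q (\<lambda>x. c * f x) = c * q f"
    and "\<And>f. f \<in> V \<Longrightarrow> q f \<le> g f"
  using exists_minimal_sublinear_minorant[of g] dir_deriv_sublinear_minorant
    minimal_sublinear_minorant_linear sublinear_minorantsD(2) by blast

end

end

section \<open>Riesz representation on \<open>C\<^sub>Z\<close>\<close>

lemma open_positive_function:
  fixes G :: "'a::metric_space set"
  assumes "open G"
  obtains d :: "'a \<Rightarrow> real" where "continuous_on UNIV d" "\<And>x. 0 \<le> d x" "\<And>x. 0 < d x \<longleftrightarrow> x \<in> G"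
proof (cases "G = UNIV")
  case True then show ?thesis using that[of "\<lambda>x. 1"] by auto
next
  case False
  have "closed (- G)" "- G \<noteq> {}" using assms False by auto
  then have "0 < infdist x (- G) \<longleftrightarrow> x \<in> G" for x
    using in_closed_iff_infdist_zero[of "- G" x] infdist_nonneg[of x "- G"] by auto
  moreover have "continuous_on UNIV (\<lambda>x. infdist x (- G))"
    by (intro continuous_at_imp_continuous_on ballI continuous_intros)
  ultimately show ?thesis using that infdist_nonneg by blast
qed

text \<open>A partition of unity \<open>w, 1 - w\<close> subordinate to \<open>{G1, G2}\<close> on the support of \<open>f\<close>;
  \<open>w = d1 / (d1 + d2)\<close> may jump where \<open>d1 + d2 = 0\<close>, but \<open>f\<close> vanishes there.\<close>

lemma continuous_on_split_open_cover:
  fixes f :: "'a::metric_space \<Rightarrow> real"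
  assumes f: "continuous_on S f" and G: "open G1" "open G2"
    and f0: "\<And>x. x \<in> S \<Longrightarrow> x \<notin> G1 \<union> G2 \<Longrightarrow> f x = 0"
  obtains w where "continuous_on S (\<lambda>x. f x * w x)" "\<And>x. 0 \<le> w x" "\<And>x. w x \<le> 1"
    "\<And>x. x \<notin> G1 \<Longrightarrow> w x = 0" "\<And>x. x \<in> S \<Longrightarrow> x \<notin> G2 \<Longrightarrow> f x * w x = f x"
proof -
  obtain d1 :: "'a \<Rightarrow> real" where d1: "continuous_on UNIV d1" "\<And>x. 0 \<le> d1 x" "\<And>x. 0 < d1 x \<longleftrightarrow> x \<in> G1"
    using open_positive_function[OF G(1)] by metis
  obtain d2 :: "'a \<Rightarrow> real" where d2: "continuous_on UNIV d2" "\<And>x. 0 \<le> d2 x" "\<And>x. 0 < d2 x \<longleftrightarrow> x \<in> G2"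
    using open_positive_function[OF G(2)] by metis
  define w where "w x = d1 x / (d1 x + d2 x)" for x
  have w01: "0 \<le> w x" "w x \<le> 1" for x
    using d1(2)[of x] d2(2)[of x] by (auto simp: w_def divide_le_eq)
  have zero: "f x = 0" if "x \<in> S" "d1 x + d2 x = 0" for x
  proof -
    have "d1 x = 0" "d2 x = 0" using that(2) d1(2)[of x] d2(2)[of x] by auto
    then show ?thesis using f0[OF that(1)] d1(3)[of x] d2(3)[of x] by auto
  qed
  have "continuous (at x within S) (\<lambda>x. f x * w x)" if x: "x \<in> S" for x
  proof (cases "d1 x + d2 x = 0")
    case False
    have "continuous (at x within S) d1" "continuous (at x within S) d2"
      using d1(1) d2(1) by (auto intro: continuous_at_imp_continuous_at_within simp: continuous_on_eq_continuous_at)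
    then show ?thesis
      using f x False unfolding w_def by (intro continuous_intros) (auto simp: continuous_on_eq_continuous_within)
  next
    case True
    have "((\<lambda>y. f y * w y) \<longlongrightarrow> 0) (at x within S)"
    proof (rule Lim_null_comparison)
      show "\<forall>\<^sub>F y in at x within S. norm (f y * w y) \<le> \<bar>f y\<bar>"
        using w01 by (auto simp: abs_mult intro!: always_eventually mult_left_le)
      have "(f \<longlongrightarrow> f x) (at x within S)" using f x by (simp add: continuous_on_def)
      then have "(f \<longlongrightarrow> 0) (at x within S)" using zero[OF x True] by simp
      then show "((\<lambda>y. \<bar>f y\<bar>) \<longlongrightarrow> 0) (at x within S)" by (rule tendsto_rabs_zero)
    qed
    then show ?thesis using zero[OF x True] by (simp add: continuous_within)
  qed
  moreover have "w x = 0" if "x \<notin> G1" for x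
    using that d1(2,3)[of x] by (simp add: w_def)
  moreover have "f x * w x = f x" if "x \<in> S" "x \<notin> G2" for x
    using that d1(2,3)[of x] d2(2,3)[of x] zero[of x] by (cases "d1 x = 0") (auto simp: w_def)
  ultimately show ?thesis
    using that[of w] w01 unfolding continuous_on_eq_continuous_within by blast
qed

definition layer :: "nat \<Rightarrow> nat \<Rightarrow> real \<Rightarrow> real" where
  "layer n i y = min (max (real n * y - real i) 0) 1"

lemma sum_clamped: "(\<Sum>i<k. min (max (y - real i) 0) 1) = min (max y 0) (real k)"
  by (induction k) (auto simp: min_def max_def)

lemma sum_layer: "0 \<le> y \<Longrightarrow> y \<le> 1 \<Longrightarrow> (\<Sum>i<n. layer n i y) = real n * y"
  unfolding layer_def sum_clamped by (simp add: mult_left_le)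

lemma layer_bounds: "0 \<le> layer n i y" "layer n i y \<le> 1"
  by (auto simp: layer_def)

lemma layer_eq_0: "0 < n \<Longrightarrow> y \<le> real i / real n \<Longrightarrow> layer n i y = 0"
  by (simp add: layer_def le_divide_eq mult.commute)

lemma layer_eq_1: "0 < n \<Longrightarrow> real (Suc i) / real n \<le> y \<Longrightarrow> layer n i y = 1"
  by (simp add: layer_def divide_le_eq mult.commute)

lemma integral_truncation_tendsto:
  fixes f :: "'a \<Rightarrow> real"
  assumes f: "integrable M f"
  shows "(\<lambda>n. integral\<^sup>L M (\<lambda>x. max (min (f x) (real n)) (- real n))) \<longlonglongrightarrow> integral\<^sup>L M f"
proof (rule integral_dominated_convergence[where w = "\<lambda>x. \<bar>f x\<bar>"])
  show "f \<in> borel_measurable M" using f by (rule borel_measurable_integrable)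
  then show "(\<lambda>x. max (min (f x) (real n)) (- real n)) \<in> borel_measurable M" for n
    by measurable
  show "integrable M (\<lambda>x. \<bar>f x\<bar>)" using f by simp
  show "AE x in M. norm (max (min (f x) (real n)) (- real n)) \<le> \<bar>f x\<bar>" for n
    by (auto intro!: AE_I2)
  have "eventually (\<lambda>n. max (min (f x) (real n)) (- real n) = f x) sequentially" for x
  proof -
    obtain N :: nat where N: "\<bar>f x\<bar> \<le> real N" using real_arch_simple by blast
    show ?thesis unfolding eventually_sequentially
    proof (intro exI allI impI)
      fix n assume "N \<le> n"
      then have "\<bar>f x\<bar> \<le> real n" using N by (meson of_nat_le_iff order_trans)
      then show "max (min (f x) (real n)) (- real n) = f x" by auto
    qed
  qed
  then show "AE x in M. (\<lambda>n. max (min (f x) (real n)) (- real n)) \<longlonglongrightarrow> f x"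
    by (intro AE_I2 tendsto_eventually)
qed

locale riesz_CZ =
  fixes \<Omega> :: "'a::metric_space set" and Z :: "'a \<Rightarrow> real" and L :: "('a \<Rightarrow> real) \<Rightarrow> real"
  assumes Z_cont: "continuous_on \<Omega> Z" and Z_ge1: "\<And>x. x \<in> \<Omega> \<Longrightarrow> 1 \<le> Z x"
    and Z_sublevel_compact: "\<And>z. 0 \<le> z \<Longrightarrow> compact {x\<in>\<Omega>. Z x \<le> z}"
    and L_add: "\<And>f g. f \<in> CZ \<Omega> Z \<Longrightarrow> g \<in> CZ \<Omega> Z \<Longrightarrow> L (\<lambda>x. f x + g x) = L f + L g"
    and L_cmult: "\<And>f c. f \<in> CZ \<Omega> Z \<Longrightarrow> L (\<lambda>x. c * f x) = c * L f"
    and L_nonneg: "\<And>f. f \<in> CZ \<Omega> Z \<Longrightarrow> (\<And>x. x \<in> \<Omega> \<Longrightarrow> 0 \<le> f x) \<Longrightarrow> 0 \<le> L f"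
    and L_tail: "((\<lambda>z. L (\<lambda>x. max (Z x - z) 0)) \<longlongrightarrow> 0) at_top"
begin

abbreviation "V \<equiv> CZ \<Omega> Z"
abbreviation "excess z \<equiv> \<lambda>x. max (Z x - z) 0"
abbreviation "relopen U \<equiv> openin (top_of_set \<Omega>) U"

lemma Z_pos: "x \<in> \<Omega> \<Longrightarrow> 0 < Z x"
  using Z_ge1[of x] by simp

lemma V_const: "(\<lambda>x. c) \<in> V"
  using CZ_const Z_ge1 by blast

lemma V_excess: "excess z \<in> V"
  by (intro CZ_max CZ_diff CZ_weight Z_cont V_const)

lemma L_zero: "L (\<lambda>x. 0) = 0"
  using L_cmult[OF CZ_zero, of 0] by simp

lemma L_uminus: "f \<in> V \<Longrightarrow> L (\<lambda>x. - f x) = - L f"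
  using L_cmult[of f "-1"] by simp

lemma L_diff: "f \<in> V \<Longrightarrow> g \<in> V \<Longrightarrow> L (\<lambda>x. f x - g x) = L f - L g"
  using L_add[OF _ CZ_uminus, of f g] L_uminus[of g] by simp

lemma L_mono: "f \<in> V \<Longrightarrow> g \<in> V \<Longrightarrow> (\<And>x. x \<in> \<Omega> \<Longrightarrow> f x \<le> g x) \<Longrightarrow> L f \<le> L g"
  using L_nonneg[OF CZ_diff[of g \<Omega> Z f]] L_diff[of g f] by fastforce

lemma L_cong: "f \<in> V \<Longrightarrow> g \<in> V \<Longrightarrow> (\<And>x. x \<in> \<Omega> \<Longrightarrow> f x = g x) \<Longrightarrow> L f = L g"
  using L_mono[of f g] L_mono[of g f] by fastforce

lemma L_sum: "finite I \<Longrightarrow> (\<And>i. i \<in> I \<Longrightarrow> g i \<in> V) \<Longrightarrow> L (\<lambda>x. \<Sum>i\<in>I. g i x) = (\<Sum>i\<in>I. L (g i))"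
proof (induction I rule: finite_induct)
  case (insert a F) then show ?case using L_add[OF _ CZ_sum, of "g a" F g] by simp
qed (simp add: L_zero)

lemma L_one_nonneg: "0 \<le> L (\<lambda>x. 1)"
  by (rule L_nonneg[OF V_const]) simp

definition below_indicator :: "'a set \<Rightarrow> ('a \<Rightarrow> real) set" where
  "below_indicator U = {f. continuous_on \<Omega> f \<and> (\<forall>x\<in>\<Omega>. 0 \<le> f x \<and> f x \<le> 1 \<and> (x \<notin> U \<longrightarrow> f x = 0))}"

definition inner_content :: "'a set \<Rightarrow> ennreal" where
  "inner_content U = (SUP f\<in>below_indicator U. ennreal (L f))"

lemma below_indicatorI:
  "continuous_on \<Omega> f \<Longrightarrow> (\<And>x. x \<in> \<Omega> \<Longrightarrow> 0 \<le> f x) \<Longrightarrow> (\<And>x. x \<in> \<Omega> \<Longrightarrow> f x \<le> 1) \<Longrightarrow>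
    (\<And>x. x \<in> \<Omega> \<Longrightarrow> x \<notin> U \<Longrightarrow> f x = 0) \<Longrightarrow> f \<in> below_indicator U"
  unfolding below_indicator_def by blast

lemma below_indicatorD:
  assumes "f \<in> below_indicator U"
  shows "continuous_on \<Omega> f" "\<And>x. x \<in> \<Omega> \<Longrightarrow> 0 \<le> f x" "\<And>x. x \<in> \<Omega> \<Longrightarrow> f x \<le> 1"
    "\<And>x. x \<in> \<Omega> \<Longrightarrow> x \<notin> U \<Longrightarrow> f x = 0"
  using assms unfolding below_indicator_def by blast+

lemma below_indicator_zero: "(\<lambda>x. 0) \<in> below_indicator U"
  by (rule below_indicatorI) auto

lemma below_indicator_support:
  "g \<in> below_indicator A \<Longrightarrow> (\<And>x. x \<in> \<Omega> \<Longrightarrow> g x \<noteq> 0 \<Longrightarrow> x \<in> B) \<Longrightarrow> g \<in> below_indicator B"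
  unfolding below_indicator_def by blast

lemma below_indicator_CZ: "f \<in> below_indicator U \<Longrightarrow> f \<in> V"
  using below_indicatorD[of f U] by (intro CZ_bounded[of _ _ _ 1] Z_ge1) auto

lemma L_below_indicator: "f \<in> below_indicator U \<Longrightarrow> 0 \<le> L f \<and> L f \<le> L (\<lambda>x. 1)"
  by (auto intro!: L_nonneg L_mono below_indicator_CZ V_const dest: below_indicatorD)

lemma inner_content_ge: "f \<in> below_indicator U \<Longrightarrow> ennreal (L f) \<le> inner_content U"
  unfolding inner_content_def by (rule SUP_upper)

lemma inner_content_le_one: "inner_content U \<le> ennreal (L (\<lambda>x. 1))"
  unfolding inner_content_def by (rule SUP_least) (auto intro!: ennreal_leI dest: L_below_indicator)

lemma inner_content_mono: "U \<subseteq> U' \<Longrightarrow> inner_content U \<le> inner_content U'"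
  unfolding inner_content_def below_indicator_def by (rule SUP_subset_mono) auto

lemma inner_content_whole: "inner_content \<Omega> = ennreal (L (\<lambda>x. 1))"
proof -
  have "(\<lambda>x. 1) \<in> below_indicator \<Omega>" by (rule below_indicatorI) auto
  then show ?thesis using inner_content_ge inner_content_le_one antisym by blast
qed

lemma inner_content_empty: "inner_content {} = 0"
proof -
  have "L f = 0" if "f \<in> below_indicator {}" for f
    using L_cong[OF below_indicator_CZ[OF that] CZ_zero] below_indicatorD(4)[OF that] L_zero by simp
  then have "inner_content {} = (SUP f\<in>below_indicator {}. 0)"
    unfolding inner_content_def by (intro SUP_cong) auto
  then show ?thesis using below_indicator_zero by (subst (asm) SUP_const) auto
qed

lemma inner_content_Un:
  assumes U: "relopen U" and W: "relopen W"
  shows "inner_content (U \<union> W) \<le> inner_content U + inner_content W"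
  unfolding inner_content_def[of "U \<union> W"]
proof (rule SUP_least)
  fix f assume f: "f \<in> below_indicator (U \<union> W)"
  obtain G1 G2 where G: "open G1" "U = \<Omega> \<inter> G1" "open G2" "W = \<Omega> \<inter> G2"
    using U W unfolding openin_open by auto
  have "f x = 0" if "x \<in> \<Omega>" "x \<notin> G1 \<union> G2" for x
    using below_indicatorD(4)[OF f that(1)] that G(2,4) by blast
  then obtain w where w: "continuous_on \<Omega> (\<lambda>x. f x * w x)" "\<And>x. 0 \<le> w x" "\<And>x. w x \<le> 1"
    "\<And>x. x \<notin> G1 \<Longrightarrow> w x = 0" "\<And>x. x \<in> \<Omega> \<Longrightarrow> x \<notin> G2 \<Longrightarrow> f x * w x = f x"
    using continuous_on_split_open_cover[OF below_indicatorD(1)[OF f] G(1,3)] by blast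
  have fU: "(\<lambda>x. f x * w x) \<in> below_indicator U"
    using below_indicatorD(2,3)[OF f] w G(2) by (intro below_indicatorI w(1)) (auto intro: mult_le_one)
  have fW: "(\<lambda>x. f x - f x * w x) \<in> below_indicator W"
  proof (rule below_indicatorI)
    show "continuous_on \<Omega> (\<lambda>x. f x - f x * w x)"
      by (rule continuous_on_diff[OF below_indicatorD(1)[OF f] w(1)])
    fix x assume x: "x \<in> \<Omega>"
    have "0 \<le> f x * w x" "f x * w x \<le> f x"
      using below_indicatorD(2)[OF f x] w(2,3)[of x] by (auto intro: mult_left_le)
    then show "0 \<le> f x - f x * w x" "f x - f x * w x \<le> 1"
      using below_indicatorD(3)[OF f x] by auto
    show "x \<notin> W \<Longrightarrow> f x - f x * w x = 0" using w(5) x G(4) by auto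
  qed
  have "L f = L (\<lambda>x. f x * w x) + L (\<lambda>x. f x - f x * w x)"
    using L_add[OF below_indicator_CZ[OF fU] below_indicator_CZ[OF fW]] L_cong[OF below_indicator_CZ[OF f]]
      below_indicator_CZ[OF fU] below_indicator_CZ[OF fW] by (simp add: CZ_add)
  then have "ennreal (L f) = ennreal (L (\<lambda>x. f x * w x)) + ennreal (L (\<lambda>x. f x - f x * w x))"
    using L_below_indicator[OF fU] L_below_indicator[OF fW] by (simp add: ennreal_plus)
  also have "\<dots> \<le> inner_content U + inner_content W" by (intro add_mono inner_content_ge fU fW)
  finally show "ennreal (L f) \<le> inner_content U + inner_content W" .
qed

lemma L_excess_small:
  assumes "0 < e" obtains z where "0 \<le> z" "L (excess z) < e"
proof -
  obtain N where "\<And>z. z \<ge> N \<Longrightarrow> L (excess z) < e"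
    using order_tendstoD(2)[OF L_tail assms] by (auto simp: eventually_at_top_linorder)
  then show ?thesis using that[of "max N 0"] by auto
qed

text \<open>Tightness: up to \<open>e\<close>, the mass of \<open>f\<close> sits on a compact set where \<open>f\<close> is positive.\<close>

lemma below_indicator_compact_approx:
  assumes f: "f \<in> below_indicator A" and e: "0 < e"
  obtains g K where "g \<in> below_indicator A" "compact K" "K \<subseteq> {x\<in>\<Omega>. 0 < f x}"
    "\<And>x. x \<in> \<Omega> \<Longrightarrow> g x \<noteq> 0 \<Longrightarrow> x \<in> K" "L f \<le> L g + e"
proof -
  obtain z where z: "0 \<le> z" "L (excess z) < e / 2" using L_excess_small[of "e / 2"] e by auto
  define \<epsilon> where "\<epsilon> = e / (2 * (L (\<lambda>x. 1) + 1))"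
  have \<epsilon>: "0 < \<epsilon>" "\<epsilon> * L (\<lambda>x. 1) \<le> e / 2"
    unfolding \<epsilon>_def using e L_one_nonneg by (auto simp: field_simps)
  define g where "g x = max (f x - \<epsilon> - excess z x) 0" for x
  define K where "K = {x\<in>\<Omega>. Z x \<le> z + 1 \<and> \<epsilon> \<le> f x}"
  have fV: "f \<in> V" by (rule below_indicator_CZ[OF f])
  have "K = {x\<in>\<Omega>. Z x \<le> z + 1} \<inter> f -` {\<epsilon>..}" by (auto simp: K_def)
  then have "closedin (top_of_set {x\<in>\<Omega>. Z x \<le> z + 1}) K"
    using continuous_closedin_preimage[of "{x\<in>\<Omega>. Z x \<le> z + 1}" f "{\<epsilon>..}"]
      continuous_on_subset[OF below_indicatorD(1)[OF f]] by auto
  then have "compact K" using closedin_compact Z_sublevel_compact[of "z + 1"] z by auto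
  moreover have "g \<in> below_indicator A"
  proof (rule below_indicatorI)
    show "continuous_on \<Omega> g" using below_indicatorD(1)[OF f] Z_cont by (auto simp: g_def intro!: continuous_intros)
    fix x assume x: "x \<in> \<Omega>"
    have "0 \<le> g x" "g x \<le> max (f x) 0" using \<epsilon> by (auto simp: g_def)
    then show "0 \<le> g x" "g x \<le> 1" "x \<notin> A \<Longrightarrow> g x = 0" using below_indicatorD(2-4)[OF f x] by auto
  qed
  moreover have "x \<in> K" if "x \<in> \<Omega>" "g x \<noteq> 0" for x
    using that below_indicatorD(3)[OF f that(1)] \<epsilon> by (auto simp: g_def K_def max_def split: if_splits)
  moreover have "L f \<le> L g + e"
  proof -
    have gV: "g \<in> V"
      unfolding g_def using CZ_max[OF CZ_diff[OF CZ_diff[OF fV V_const] V_excess] V_const] by simp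
    have "L f \<le> L (\<lambda>x. g x + (\<epsilon> + excess z x))"
      by (rule L_mono[OF fV CZ_add[OF gV CZ_add[OF V_const V_excess]]]) (auto simp: g_def)
    also have "\<dots> = L g + \<epsilon> * L (\<lambda>x. 1) + L (excess z)"
      using L_add[OF gV CZ_add[OF V_const V_excess]] L_add[OF V_const V_excess]
        L_cmult[OF V_const[of 1], of \<epsilon>] by simp
    finally show ?thesis using \<epsilon> z by simp
  qed
  ultimately show ?thesis using that \<epsilon> by (force simp: K_def)
qed

lemma inner_content_UN_atMost:
  fixes U :: "nat \<Rightarrow> 'a set"
  assumes "\<And>n. relopen (U n)" shows "inner_content (\<Union>n\<le>N. U n) \<le> (\<Sum>n\<le>N. inner_content (U n))"
proof (induction N)
  case (Suc N)
  have "(\<Union>n\<le>Suc N. U n) = (\<Union>n\<le>N. U n) \<union> U (Suc N)" by (auto simp: atMost_Suc)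
  moreover have "relopen (\<Union>n\<le>N. U n)" using assms by auto
  ultimately have "inner_content (\<Union>n\<le>Suc N. U n) \<le> inner_content (\<Union>n\<le>N. U n) + inner_content (U (Suc N))"
    using inner_content_Un assms by simp
  also have "\<dots> \<le> (\<Sum>n\<le>N. inner_content (U n)) + inner_content (U (Suc N))"
    using Suc by (rule add_right_mono)
  finally show ?case by simp
qed simp

lemma inner_content_UN:
  assumes U: "\<And>n. relopen (U n)" shows "inner_content (\<Union>n. U n) \<le> (\<Sum>n. inner_content (U n))"
  unfolding inner_content_def[of "\<Union>n. U n"]
proof (rule SUP_least)
  fix f assume f: "f \<in> below_indicator (\<Union>n. U n)"
  obtain G where G: "\<And>n. open (G n)" "\<And>n. U n = \<Omega> \<inter> G n"
    using U unfolding openin_open by metis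
  show "ennreal (L f) \<le> (\<Sum>n. inner_content (U n))"
  proof (rule ennreal_le_epsilon)
    fix e :: real assume e: "0 < e"
    obtain g K where gK: "g \<in> below_indicator (\<Union>n. U n)" "compact K" "K \<subseteq> {x\<in>\<Omega>. 0 < f x}"
      "\<And>x. x \<in> \<Omega> \<Longrightarrow> g x \<noteq> 0 \<Longrightarrow> x \<in> K" "L f \<le> L g + e"
      using below_indicator_compact_approx[OF f e] by blast
    have "K \<subseteq> (\<Union>n. G n)"
    proof
      fix x assume "x \<in> K"
      then have "x \<in> \<Omega>" "f x \<noteq> 0" using gK(3) by auto
      then show "x \<in> (\<Union>n. G n)" using below_indicatorD(4)[OF f] G(2) by blast
    qed
    then obtain J where J: "finite J" "K \<subseteq> (\<Union>n\<in>J. G n)"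
      using compactE_image[OF gK(2), of UNIV G] G(1) by metis
    define N where "N = Max (insert 0 J)"
    have JN: "J \<subseteq> {..N}" unfolding N_def using J(1) by auto
    have "g \<in> below_indicator (\<Union>n\<le>N. U n)"
    proof (rule below_indicator_support[OF gK(1)])
      fix x assume "x \<in> \<Omega>" "g x \<noteq> 0"
      then have "x \<in> K" "x \<in> \<Omega>" using gK(4) by auto
      then show "x \<in> (\<Union>n\<le>N. U n)" using J(2) JN G(2) by blast
    qed
    then have "ennreal (L g) \<le> inner_content (\<Union>n\<le>N. U n)" by (rule inner_content_ge)
    also have "\<dots> \<le> (\<Sum>n\<le>N. inner_content (U n))" by (rule inner_content_UN_atMost[OF U])
    also have "\<dots> \<le> (\<Sum>n. inner_content (U n))" by (rule sum_le_suminf[OF summableI]) auto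
    finally have g_le: "ennreal (L g) \<le> (\<Sum>n. inner_content (U n))" .
    have "ennreal (L f) \<le> ennreal (L g + e)" using gK(5) by (rule ennreal_leI)
    also have "\<dots> = ennreal (L g) + ennreal e"
      using L_below_indicator[OF gK(1)] e by (intro ennreal_plus) auto
    also have "\<dots> \<le> (\<Sum>n. inner_content (U n)) + ennreal e" using g_le by (rule add_right_mono)
    finally show "ennreal (L f) \<le> (\<Sum>n. inner_content (U n)) + ennreal e" .
  qed
qed

definition outer_content :: "'a set \<Rightarrow> ennreal" where
  "outer_content A = (INF U\<in>{U. relopen U \<and> A \<subseteq> U}. inner_content U)"

lemma outer_content_le: "relopen U \<Longrightarrow> A \<subseteq> U \<Longrightarrow> outer_content A \<le> inner_content U"
  unfolding outer_content_def by (rule INF_lower) auto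

lemma outer_content_open: "relopen U \<Longrightarrow> outer_content U = inner_content U"
  by (rule antisym[OF outer_content_le]) (auto simp: outer_content_def intro!: INF_greatest inner_content_mono)

lemma outer_content_mono: "A \<subseteq> B \<Longrightarrow> outer_content A \<le> outer_content B"
  unfolding outer_content_def by (rule INF_superset_mono) auto

lemma outer_content_empty: "outer_content {} = 0"
  using outer_content_open[of "{}"] inner_content_empty by simp

lemma outer_content_approx:
  assumes A: "A \<subseteq> \<Omega>" and e: "0 < e"
  obtains U where "relopen U" "A \<subseteq> U" "inner_content U \<le> outer_content A + ennreal e"
proof -
  have "outer_content A \<le> ennreal (L (\<lambda>x. 1))"
    using outer_content_le[of \<Omega> A] inner_content_le_one[of \<Omega>] A by auto
  then have "outer_content A < \<infinity>" by (simp add: le_less_trans)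
  then have "outer_content A < outer_content A + ennreal e"
    using e by (simp add: ennreal_add_left_cancel_less)
  then obtain U where "U \<in> {U. relopen U \<and> A \<subseteq> U}" "inner_content U < outer_content A + ennreal e"
    unfolding outer_content_def[of A] by (subst (asm) INF_less_iff) auto
  then show ?thesis using that by auto
qed

lemma outer_content_countably_subadditive:
  assumes A: "\<And>i. A i \<subseteq> \<Omega>" shows "outer_content (\<Union>i. A i) \<le> (\<Sum>i. outer_content (A i))"
proof (rule ennreal_le_epsilon)
  fix e :: real assume e: "0 < e"
  have "\<exists>U. relopen U \<and> A i \<subseteq> U \<and> inner_content U \<le> outer_content (A i) + ennreal (e * (1/2)^Suc i)"
    for i using outer_content_approx[OF A, of "e * (1/2)^Suc i" i] e by auto
  then obtain U where U: "\<And>i. relopen (U i)" "\<And>i. A i \<subseteq> U i"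
      "\<And>i. inner_content (U i) \<le> outer_content (A i) + ennreal (e * (1/2)^Suc i)"
    by metis
  have "outer_content (\<Union>i. A i) \<le> inner_content (\<Union>i. U i)"
    using U(1,2) by (intro outer_content_le) auto
  also have "\<dots> \<le> (\<Sum>i. inner_content (U i))" by (rule inner_content_UN[OF U(1)])
  also have "\<dots> \<le> (\<Sum>i. outer_content (A i) + ennreal (e * (1/2)^Suc i))"
    by (intro suminf_le[OF U(3) summableI summableI])
  also have "\<dots> = (\<Sum>i. outer_content (A i)) + (\<Sum>i. ennreal (e * (1/2)^Suc i))"
    by (rule suminf_add[OF summableI summableI, symmetric])
  also have "(\<Sum>i. ennreal (e * (1/2)^Suc i)) = ennreal (\<Sum>i. e * (1/2)^Suc i)"
    using e by (intro suminf_ennreal2 summable_mult sums_summable[OF power_half_series]) auto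
  also have "(\<Sum>i. e * (1/2)^Suc i) = e"
    using suminf_mult[OF sums_summable[OF power_half_series], of e] sums_unique[OF power_half_series] by simp
  finally show "outer_content (\<Union>i. A i) \<le> (\<Sum>i. outer_content (A i)) + ennreal e" .
qed

lemma outer_measure_space_outer_content: "outer_measure_space (Pow \<Omega>) outer_content"
  unfolding outer_measure_space_def positive_def increasing_def countably_subadditive_def
proof (intro conjI ballI allI impI)
  fix A :: "nat \<Rightarrow> 'a set" assume "range A \<subseteq> Pow \<Omega>"
  then show "outer_content (\<Union>i. A i) \<le> (\<Sum>i. outer_content (A i))"
    by (intro outer_content_countably_subadditive) auto
qed (auto simp: outer_content_empty outer_content_mono)

lemma L_add_inner_content_disjoint:
  assumes f: "f \<in> below_indicator W" and fK: "\<And>x. x \<in> \<Omega> \<Longrightarrow> x \<notin> K \<Longrightarrow> f x = 0"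
  shows "ennreal (L f) + inner_content (W - K) \<le> inner_content W"
proof -
  have "ennreal (L f) + inner_content (W - K) = (SUP g\<in>below_indicator (W - K). ennreal (L f) + ennreal (L g))"
    unfolding inner_content_def
    by (rule ennreal_SUP_add_right) (use below_indicator_zero in blast)
  also have "\<dots> \<le> inner_content W"
  proof (rule SUP_least)
    fix g assume g: "g \<in> below_indicator (W - K)"
    have "(\<lambda>x. f x + g x) \<in> below_indicator W"
    proof (rule below_indicatorI)
      show "continuous_on \<Omega> (\<lambda>x. f x + g x)"
        using below_indicatorD(1)[OF f] below_indicatorD(1)[OF g] by (rule continuous_on_add)
      fix x assume x: "x \<in> \<Omega>"
      show "0 \<le> f x + g x" "f x + g x \<le> 1" "x \<notin> W \<Longrightarrow> f x + g x = 0"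
        using below_indicatorD(2-4)[OF f x] below_indicatorD(2-4)[OF g x] fK[OF x] by (cases "x \<in> K"; auto)+
    qed
    then have "ennreal (L (\<lambda>x. f x + g x)) \<le> inner_content W" by (rule inner_content_ge)
    then show "ennreal (L f) + ennreal (L g) \<le> inner_content W"
      using L_add[OF below_indicator_CZ[OF f] below_indicator_CZ[OF g]]
        L_below_indicator[OF f] L_below_indicator[OF g] by (simp add: ennreal_plus)
  qed
  finally show ?thesis .
qed

lemma below_indicator_shrink:
  assumes f: "f \<in> below_indicator A" and e: "0 < e"
  obtains f' \<epsilon> where "f' \<in> below_indicator A" "0 < \<epsilon>" "\<And>x. x \<in> \<Omega> \<Longrightarrow> f x < \<epsilon> \<Longrightarrow> f' x = 0"
    "ennreal (L f) \<le> ennreal (L f') + ennreal e"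
proof -
  define \<epsilon> where "\<epsilon> = e / (L (\<lambda>x. 1) + 1)"
  have \<epsilon>: "0 < \<epsilon>" "\<epsilon> * L (\<lambda>x. 1) \<le> e"
    unfolding \<epsilon>_def using e L_one_nonneg by (auto simp: field_simps)
  define f' where "f' x = max (f x - \<epsilon>) 0" for x
  have f': "f' \<in> below_indicator A"
  proof (rule below_indicatorI)
    show "continuous_on \<Omega> f'" using below_indicatorD(1)[OF f] by (auto simp: f'_def intro!: continuous_intros)
    fix x assume x: "x \<in> \<Omega>"
    show "0 \<le> f' x" "f' x \<le> 1" "x \<notin> A \<Longrightarrow> f' x = 0"
      using below_indicatorD(2-4)[OF f x] \<epsilon> by (auto simp: f'_def)
  qed
  have "L f \<le> L (\<lambda>x. f' x + \<epsilon>)"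
    by (rule L_mono[OF below_indicator_CZ[OF f] CZ_add[OF below_indicator_CZ[OF f'] V_const]])
      (auto simp: f'_def)
  also have "\<dots> \<le> L f' + e"
    using L_add[OF below_indicator_CZ[OF f'] V_const] L_cmult[OF V_const[of 1], of \<epsilon>] \<epsilon> by simp
  finally have "ennreal (L f) \<le> ennreal (L f' + e)" by (rule ennreal_leI)
  also have "\<dots> = ennreal (L f') + ennreal e"
    using L_below_indicator[OF f'] e by (intro ennreal_plus) auto
  finally have "ennreal (L f) \<le> ennreal (L f') + ennreal e" .
  moreover have "f' x = 0" if "f x < \<epsilon>" for x using that by (simp add: f'_def)
  ultimately show ?thesis using that[OF f' \<epsilon>(1)] by blast
qed

text \<open>The key inequality of the Caratheodory criterion for relatively open \<open>U\<close>.\<close>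

lemma inner_content_Int_add_outer_content_diff:
  assumes U: "relopen U" and W: "relopen W"
  shows "inner_content (W \<inter> U) + outer_content (W - U) \<le> inner_content W"
proof -
  have "inner_content (W \<inter> U) + outer_content (W - U)
      = (SUP f\<in>below_indicator (W \<inter> U). ennreal (L f) + outer_content (W - U))"
    unfolding inner_content_def
    by (rule ennreal_SUP_add_left[symmetric]) (use below_indicator_zero in blast)
  also have "\<dots> \<le> inner_content W"
  proof (rule SUP_least)
    fix f assume f: "f \<in> below_indicator (W \<inter> U)"
    show "ennreal (L f) + outer_content (W - U) \<le> inner_content W"
    proof (rule ennreal_le_epsilon)
      fix e :: real assume e: "0 < e"
      obtain f' \<epsilon> where f': "f' \<in> below_indicator (W \<inter> U)" "0 < \<epsilon>"
        "\<And>x. x \<in> \<Omega> \<Longrightarrow> f x < \<epsilon> \<Longrightarrow> f' x = 0" "ennreal (L f) \<le> ennreal (L f') + ennreal e"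
        using below_indicator_shrink[OF f e] by blast
      define K where "K = {x\<in>\<Omega>. \<epsilon> \<le> f x}"
      have "closedin (top_of_set \<Omega>) K"
        using continuous_closedin_preimage[OF below_indicatorD(1)[OF f], of "{\<epsilon>..}"]
        by (simp add: K_def vimage_def Int_def conj_commute)
      then have "relopen (W - K)" using W by (rule openin_diff[rotated])
      moreover have "K \<subseteq> W \<inter> U" using below_indicatorD(4)[OF f] f'(2) by (force simp: K_def)
      ultimately have "outer_content (W - U) \<le> inner_content (W - K)"
        by (intro outer_content_le) auto
      then have "ennreal (L f) + outer_content (W - U) \<le> (ennreal (L f') + ennreal e) + inner_content (W - K)"
        by (rule add_mono[OF f'(4)])
      also have "\<dots> = (ennreal (L f') + inner_content (W - K)) + ennreal e" by (simp add: ac_simps)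
      also have "\<dots> \<le> inner_content W + ennreal e"
      proof (rule add_right_mono, rule L_add_inner_content_disjoint)
        show "f' \<in> below_indicator W"
          using below_indicatorD(4)[OF f'(1)] by (intro below_indicator_support[OF f'(1)]) auto
        show "f' x = 0" if "x \<in> \<Omega>" "x \<notin> K" for x using that f'(3) by (simp add: K_def)
      qed
      finally show "ennreal (L f) + outer_content (W - U) \<le> inner_content W + ennreal e" .
    qed
  qed
  finally show ?thesis .
qed

lemma open_in_lambda_system:
  assumes U: "relopen U" shows "U \<in> lambda_system \<Omega> (Pow \<Omega>) outer_content"
  unfolding lambda_system_def
proof (intro CollectI conjI ballI)
  show "U \<in> Pow \<Omega>" using openin_subset[OF U] by auto
  fix A assume "A \<in> Pow \<Omega>"
  then have A: "A \<subseteq> \<Omega>" by auto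
  have "subadditive (Pow \<Omega>) outer_content"
    using ring_of_sets.countably_subadditive_subadditive[OF ring_of_sets_Pow] outer_measure_space_outer_content
    unfolding outer_measure_space_def by blast
  moreover have "A = (U \<inter> A) \<union> ((\<Omega> - U) \<inter> A)" using A by auto
  ultimately have "outer_content A \<le> outer_content (U \<inter> A) + outer_content ((\<Omega> - U) \<inter> A)"
    using A subadditiveD[of "Pow \<Omega>" outer_content "U \<inter> A" "(\<Omega> - U) \<inter> A"] by auto
  moreover have "outer_content (U \<inter> A) + outer_content ((\<Omega> - U) \<inter> A) \<le> outer_content A"
    unfolding outer_content_def[of A]
  proof (rule INF_greatest)
    fix W assume W: "W \<in> {W. relopen W \<and> A \<subseteq> W}"
    have "outer_content (U \<inter> A) \<le> inner_content (W \<inter> U)"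
      using W U by (intro outer_content_le) auto
    moreover have "outer_content ((\<Omega> - U) \<inter> A) \<le> outer_content (W - U)"
      using W by (intro outer_content_mono) auto
    ultimately have "outer_content (U \<inter> A) + outer_content ((\<Omega> - U) \<inter> A)
        \<le> inner_content (W \<inter> U) + outer_content (W - U)" by (rule add_mono)
    also have "\<dots> \<le> inner_content W" using inner_content_Int_add_outer_content_diff[OF U] W by blast
    finally show "outer_content (U \<inter> A) + outer_content ((\<Omega> - U) \<inter> A) \<le> inner_content W" .
  qed
  ultimately show "outer_content (U \<inter> A) + outer_content ((\<Omega> - U) \<inter> A) = outer_content A"
    by (rule antisym[rotated])
qed

lemma sigma_algebra_restrict_borel: "sigma_algebra \<Omega> (sets (restrict_space borel \<Omega>))"
  using sets.sigma_algebra_axioms[of "restrict_space borel \<Omega>"] by (simp add: space_restrict_space)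

lemma restrict_borel_in_lambda_system:
  "sets (restrict_space borel \<Omega>) \<subseteq> lambda_system \<Omega> (Pow \<Omega>) outer_content"
proof -
  interpret \<Lambda>: sigma_algebra \<Omega> "lambda_system \<Omega> (Pow \<Omega>) outer_content"
    using sigma_algebra.caratheodory_lemma[OF sigma_algebra_Pow outer_measure_space_outer_content]
    unfolding measure_space_def by blast
  have "\<Omega> \<inter> B \<in> lambda_system \<Omega> (Pow \<Omega>) outer_content" if "B \<in> sigma_sets UNIV {S. open S}" for B
    using that
  proof induction
    case (Basic a) then show ?case by (intro open_in_lambda_system) auto
  next
    case (Compl a)
    have "\<Omega> \<inter> (UNIV - a) = \<Omega> - (\<Omega> \<inter> a)" by auto
    then show ?case using \<Lambda>.compl_sets[OF Compl(2)] by simp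
  next
    case (Union a)
    have "\<Omega> \<inter> (\<Union>i. a i) = (\<Union>i. \<Omega> \<inter> a i)" by auto
    then show ?case using \<Lambda>.countable_UN[of "\<lambda>i. \<Omega> \<inter> a i"] Union(2) by auto
  qed (use open_in_lambda_system[of "{}"] in simp)
  then show ?thesis by (auto simp: sets_restrict_space sets_borel)
qed

definition riesz_measure :: "'a measure" where
  "riesz_measure = measure_of \<Omega> (sets (restrict_space borel \<Omega>)) outer_content"

lemma space_riesz_measure [simp]: "space riesz_measure = \<Omega>"
  unfolding riesz_measure_def by (rule sigma_algebra.space_measure_of_eq[OF sigma_algebra_restrict_borel])

lemma sets_riesz_measure [simp]: "sets riesz_measure = sets (restrict_space borel \<Omega>)"
  unfolding riesz_measure_def by (rule sigma_algebra.sets_measure_of_eq[OF sigma_algebra_restrict_borel])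

lemma emeasure_riesz_measure:
  assumes "A \<in> sets (restrict_space borel \<Omega>)" shows "emeasure riesz_measure A = outer_content A"
proof -
  have "measure_space \<Omega> (sets (restrict_space borel \<Omega>)) outer_content"
    using measure_down[OF sigma_algebra.caratheodory_lemma[OF sigma_algebra_Pow outer_measure_space_outer_content]
        sigma_algebra_restrict_borel restrict_borel_in_lambda_system] .
  then show ?thesis
    unfolding riesz_measure_def measure_space_def
    using emeasure_measure_of_sigma[OF sigma_algebra_restrict_borel _ _ assms] by blast
qed

lemma openin_in_restrict_borel: "relopen U \<Longrightarrow> U \<in> sets (restrict_space borel \<Omega>)"
  unfolding openin_open sets_restrict_space by auto

lemma closedin_in_restrict_borel: "closedin (top_of_set \<Omega>) K \<Longrightarrow> K \<in> sets (restrict_space borel \<Omega>)"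
  unfolding closedin_closed sets_restrict_space by auto

lemma emeasure_riesz_measure_open: "relopen U \<Longrightarrow> emeasure riesz_measure U = inner_content U"
  using emeasure_riesz_measure[OF openin_in_restrict_borel] outer_content_open by simp

lemma finite_measure_riesz_measure: "finite_measure riesz_measure"
  by (rule finite_measureI) (simp add: emeasure_riesz_measure_open inner_content_whole)

interpretation M: finite_measure riesz_measure by (rule finite_measure_riesz_measure)

lemma measure_riesz_measure_whole: "measure riesz_measure \<Omega> = L (\<lambda>x. 1)"
  using emeasure_riesz_measure_open[of \<Omega>] inner_content_whole L_one_nonneg by (simp add: measure_def)

lemma borel_measurable_riesz_measure: "continuous_on \<Omega> f \<Longrightarrow> f \<in> borel_measurable riesz_measure"
  unfolding measurable_cong_sets[OF sets_riesz_measure refl, of borel]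
  by (rule borel_measurable_continuous_on_restrict)

lemma integrable_bounded:
  fixes f :: "'a \<Rightarrow> real"
  shows "continuous_on \<Omega> f \<Longrightarrow> (\<And>x. x \<in> \<Omega> \<Longrightarrow> \<bar>f x\<bar> \<le> c) \<Longrightarrow> integrable riesz_measure f"
  by (rule M.integrable_const_bound[where B=c]) (auto intro!: AE_I2 borel_measurable_riesz_measure)

lemma measure_closedin_le_L:
  assumes K: "closedin (top_of_set \<Omega>) K" and h: "h \<in> V" "\<And>x. x \<in> \<Omega> \<Longrightarrow> 0 \<le> h x \<and> h x \<le> 1"
    and h1: "\<And>x. x \<in> K \<Longrightarrow> h x = 1"
  shows "measure riesz_measure K \<le> L h"
proof -
  have open_compl: "relopen (\<Omega> - K)" using K by (simp add: openin_diff)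
  have "(\<lambda>x. 1 - h x) \<in> below_indicator (\<Omega> - K)"
    using h h1 by (intro below_indicatorI continuous_intros CZ_continuous_on) auto
  then have "ennreal (L (\<lambda>x. 1 - h x)) \<le> ennreal (measure riesz_measure (\<Omega> - K))"
    using inner_content_ge emeasure_riesz_measure_open[OF open_compl] M.emeasure_eq_measure by metis
  then have "L (\<lambda>x. 1 - h x) \<le> measure riesz_measure (\<Omega> - K)" by (simp add: ennreal_le_iff)
  also have "\<dots> = L (\<lambda>x. 1) - measure riesz_measure K"
    using M.finite_measure_compl[of K] closedin_in_restrict_borel[OF K] measure_riesz_measure_whole by simp
  finally show ?thesis using L_diff[OF V_const h(1)] by simp
qed

lemma integral_le_measure_superlevel:
  fixes f g :: "'a \<Rightarrow> real"
  assumes f: "continuous_on \<Omega> f" and g: "continuous_on \<Omega> g" "\<And>x. x \<in> \<Omega> \<Longrightarrow> 0 \<le> g x \<and> g x \<le> 1"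
    and g0: "\<And>x. x \<in> \<Omega> \<Longrightarrow> f x \<le> t \<Longrightarrow> g x = 0"
  shows "integral\<^sup>L riesz_measure g \<le> measure riesz_measure {x\<in>\<Omega>. t < f x}"
proof -
  have "relopen {x\<in>\<Omega>. t < f x}"
    using continuous_openin_preimage_gen[OF f open_greaterThan[of t]] by (simp add: vimage_def Int_def conj_commute)
  then have S: "{x\<in>\<Omega>. t < f x} \<in> sets riesz_measure" by (simp add: openin_in_restrict_borel)
  have "integral\<^sup>L riesz_measure g \<le> integral\<^sup>L riesz_measure (indicator {x\<in>\<Omega>. t < f x})"
  proof (rule integral_mono)
    show "integrable riesz_measure g" using g by (intro integrable_bounded[of _ 1]) auto
    show "integrable riesz_measure (indicator {x\<in>\<Omega>. t < f x} :: _ \<Rightarrow> real)"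
      using S by (intro integrable_real_indicator) (auto simp: M.emeasure_eq_measure)
    show "g x \<le> indicator {x\<in>\<Omega>. t < f x} x" if "x \<in> space riesz_measure" for x
      using that g(2)[of x] g0[of x] by (cases "t < f x") auto
  qed
  also have "\<dots> = measure riesz_measure {x\<in>\<Omega>. t < f x}"
    using S by (simp add: Int_absorb2[of "{x\<in>\<Omega>. t < f x}" \<Omega>] subset_eq)
  finally show ?thesis .
qed

lemma integral_minus_L_le:
  assumes f: "f \<in> below_indicator \<Omega>" and n: "0 < n"
  shows "real n * (integral\<^sup>L riesz_measure f - L f) \<le> L (\<lambda>x. 1)"
proof -
  define g where "g i x = layer n i (f x)" for i x
  define m where "m i = measure riesz_measure {x\<in>\<Omega>. real i / real n < f x}" for i
  have fc: "continuous_on \<Omega> f" by (rule below_indicatorD(1)[OF f])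
  have gc: "continuous_on \<Omega> (g i)" for i
    unfolding g_def layer_def using fc by (intro continuous_intros)
  have gV: "g i \<in> V" for i using gc layer_bounds by (intro CZ_bounded[of _ _ _ 1] Z_ge1) (auto simp: g_def)
  have gint: "integrable riesz_measure (g i)" for i
    using gc layer_bounds by (intro integrable_bounded[of _ 1]) (auto simp: g_def)
  have gsum: "(\<Sum>i<n. g i x) = real n * f x" if "x \<in> \<Omega>" for x
    unfolding g_def using sum_layer below_indicatorD(2,3)[OF f that] by blast
  have int_g: "integral\<^sup>L riesz_measure (g i) \<le> m i" for i
    unfolding m_def using layer_bounds layer_eq_0[OF n]
    by (intro integral_le_measure_superlevel fc gc) (auto simp: g_def)
  have L_g: "m (Suc i) \<le> L (g i)" for i
  proof -
    have K: "closedin (top_of_set \<Omega>) {x\<in>\<Omega>. real (Suc i) / real n \<le> f x}"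
      using continuous_closedin_preimage[OF fc closed_atLeast] by (simp add: vimage_def Int_def conj_commute)
    have "m (Suc i) \<le> measure riesz_measure {x\<in>\<Omega>. real (Suc i) / real n \<le> f x}"
      unfolding m_def using closedin_in_restrict_borel[OF K] by (intro M.finite_measure_mono) auto
    also have "\<dots> \<le> L (g i)"
      using layer_bounds layer_eq_1[OF n] by (intro measure_closedin_le_L[OF K gV]) (auto simp: g_def)
    finally show ?thesis .
  qed
  have "real n * integral\<^sup>L riesz_measure f = integral\<^sup>L riesz_measure (\<lambda>x. \<Sum>i<n. g i x)"
    by (subst Bochner_Integration.integral_cong[OF refl, of _ _ "\<lambda>x. real n * f x"]) (auto simp: gsum)
  also have "\<dots> = (\<Sum>i<n. integral\<^sup>L riesz_measure (g i))" by (subst Bochner_Integration.integral_sum) (auto intro: gint)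
  finally have int_sum: "real n * integral\<^sup>L riesz_measure f = (\<Sum>i<n. integral\<^sup>L riesz_measure (g i))" .
  have fV: "f \<in> V" by (rule below_indicator_CZ[OF f])
  have "real n * L f = L (\<lambda>x. real n * f x)" by (rule L_cmult[OF fV, symmetric])
  also have "\<dots> = L (\<lambda>x. \<Sum>i<n. g i x)" by (rule L_cong[OF CZ_cmult[OF fV] CZ_sum[OF gV]]) (simp add: gsum)
  also have "\<dots> = (\<Sum>i<n. L (g i))" by (rule L_sum) (auto simp: gV)
  finally have "real n * L f = (\<Sum>i<n. L (g i))" .
  with int_sum have "real n * (integral\<^sup>L riesz_measure f - L f)
      = (\<Sum>i<n. integral\<^sup>L riesz_measure (g i) - L (g i))"
    by (simp add: right_diff_distrib sum_subtractf)
  also have "\<dots> \<le> (\<Sum>i<n. m i - m (Suc i))" by (intro sum_mono diff_mono int_g L_g)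
  also have "\<dots> = m 0 - m n" by (rule sum_lessThan_telescope')
  also have "\<dots> \<le> m 0" unfolding m_def by simp
  also have "\<dots> \<le> measure riesz_measure \<Omega>"
    unfolding m_def using openin_in_restrict_borel[OF openin_subtopology_self]
    by (intro M.finite_measure_mono) auto
  finally show ?thesis using measure_riesz_measure_whole by simp
qed

lemma integral_le_L_below_indicator:
  assumes f: "f \<in> below_indicator \<Omega>" shows "integral\<^sup>L riesz_measure f \<le> L f"
proof (rule ccontr)
  assume "\<not> ?thesis"
  then have d: "0 < integral\<^sup>L riesz_measure f - L f" by simp
  obtain n :: nat where n: "L (\<lambda>x. 1) / (integral\<^sup>L riesz_measure f - L f) < real n"
    using reals_Archimedean2 by blast
  then have "0 < n" using L_one_nonneg d by (cases n) (auto simp: divide_less_0_iff)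
  have "L (\<lambda>x. 1) < real n * (integral\<^sup>L riesz_measure f - L f)" using n d by (simp add: divide_less_eq)
  then show False using integral_minus_L_le[OF f \<open>0 < n\<close>] by simp
qed

lemma integral_le_L_bounded:
  assumes fV: "f \<in> V" and fb: "\<And>x. x \<in> \<Omega> \<Longrightarrow> \<bar>f x\<bar> \<le> c"
  shows "integral\<^sup>L riesz_measure f \<le> L f"
proof -
  define a where "a = 1 / (2 * max c 1)"
  have a: "0 < a" "\<And>x. x \<in> \<Omega> \<Longrightarrow> \<bar>a * f x\<bar> \<le> 1 / 2"
  proof -
    show "0 < a" by (simp add: a_def)
    fix x assume "x \<in> \<Omega>"
    then have "\<bar>f x\<bar> \<le> max c 1" using fb by (simp add: le_max_iff_disj)
    then show "\<bar>a * f x\<bar> \<le> 1 / 2" by (simp add: a_def abs_mult divide_le_eq)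
  qed
  define h where "h x = a * f x + 1 / 2" for x
  have "h \<in> below_indicator \<Omega>"
  proof (rule below_indicatorI)
    show "continuous_on \<Omega> h" using CZ_continuous_on[OF fV] by (auto simp: h_def intro!: continuous_intros)
    fix x assume "x \<in> \<Omega>"
    then show "0 \<le> h x" "h x \<le> 1" using a(2)[of x] by (auto simp: h_def abs_le_iff)
  qed simp
  then have "integral\<^sup>L riesz_measure h \<le> L h" by (rule integral_le_L_below_indicator)
  moreover have "integral\<^sup>L riesz_measure h = a * integral\<^sup>L riesz_measure f + 1 / 2 * L (\<lambda>x. 1)"
    unfolding h_def using integrable_bounded[OF CZ_continuous_on[OF fV] fb] measure_riesz_measure_whole by simp
  moreover have "L h = a * L f + 1 / 2 * L (\<lambda>x. 1)"
    unfolding h_def using L_add[OF CZ_cmult[OF fV] V_const] L_cmult[OF fV] L_cmult[OF V_const[of 1], of "1/2"] by simp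
  ultimately show ?thesis using a(1) by simp
qed

lemma integral_eq_L_bounded:
  assumes fV: "f \<in> V" and fb: "\<And>x. x \<in> \<Omega> \<Longrightarrow> \<bar>f x\<bar> \<le> c"
  shows "integral\<^sup>L riesz_measure f = L f"
  using integral_le_L_bounded[OF fV fb] integral_le_L_bounded[OF CZ_uminus[OF fV], of c] fb L_uminus[OF fV]
  by simp

lemma nn_integral_weight_le: "(\<integral>\<^sup>+x. ennreal (Z x) \<partial>riesz_measure) \<le> ennreal (L Z)"
proof -
  define Zn where "Zn n x = min (Z x) (real n)" for n :: nat and x
  have ZnV: "Zn n \<in> V" for n unfolding Zn_def by (intro CZ_min CZ_weight Z_cont V_const)
  have Zn_bound: "\<bar>Zn n x\<bar> \<le> real n" if "x \<in> \<Omega>" for n x using Z_ge1[OF that] by (auto simp: Zn_def)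
  have "(\<integral>\<^sup>+x. ennreal (Z x) \<partial>riesz_measure) = (\<integral>\<^sup>+x. (SUP n. ennreal (Zn n x)) \<partial>riesz_measure)"
  proof (rule nn_integral_cong)
    fix x
    obtain N :: nat where "Z x \<le> real N" using real_arch_simple by blast
    then have "ennreal (Z x) = ennreal (Zn N x)" by (simp add: Zn_def)
    also have "\<dots> \<le> (SUP n. ennreal (Zn n x))" by (rule SUP_upper) simp
    finally show "ennreal (Z x) = (SUP n. ennreal (Zn n x))"
      by (intro antisym SUP_least) (auto simp: Zn_def intro!: ennreal_leI)
  qed
  also have "\<dots> = (SUP n. \<integral>\<^sup>+x. ennreal (Zn n x) \<partial>riesz_measure)"
  proof (rule nn_integral_monotone_convergence_SUP)
    show "incseq (\<lambda>n x. ennreal (Zn n x))"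
      unfolding incseq_def le_fun_def Zn_def by (auto intro!: ennreal_leI)
    show "(\<lambda>x. ennreal (Zn n x)) \<in> borel_measurable riesz_measure" for n
      using borel_measurable_riesz_measure[OF CZ_continuous_on[OF ZnV]] by simp
  qed
  also have "\<dots> \<le> ennreal (L Z)"
  proof (rule SUP_least)
    fix n
    have "(\<integral>\<^sup>+x. ennreal (Zn n x) \<partial>riesz_measure) = ennreal (integral\<^sup>L riesz_measure (Zn n))"
    proof (rule nn_integral_eq_integral[OF integrable_bounded[OF CZ_continuous_on[OF ZnV] Zn_bound]])
      show "AE x in riesz_measure. 0 \<le> Zn n x"
        by (rule AE_I2) (use Z_ge1 in \<open>force simp: Zn_def\<close>)
    qed
    also have "\<dots> = ennreal (L (Zn n))" using integral_eq_L_bounded[OF ZnV Zn_bound] by simp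
    also have "\<dots> \<le> ennreal (L Z)"
      by (rule ennreal_leI, rule L_mono[OF ZnV CZ_weight[OF Z_cont]]) (simp add: Zn_def)
    finally show "(\<integral>\<^sup>+x. ennreal (Zn n x) \<partial>riesz_measure) \<le> ennreal (L Z)" .
  qed
  finally show ?thesis .
qed

lemma integrable_CZ: assumes fV: "f \<in> V" shows "integrable riesz_measure f"
proof -
  obtain c where c: "0 < c" "\<And>x. x \<in> \<Omega> \<Longrightarrow> \<bar>f x\<bar> \<le> c * Z x"
    using CZ_boundE[OF fV Z_pos] by blast
  have Z_nn: "(\<integral>\<^sup>+x. ennreal (norm (Z x)) \<partial>riesz_measure) = (\<integral>\<^sup>+x. ennreal (Z x) \<partial>riesz_measure)"
  proof (rule nn_integral_cong)
    fix x assume "x \<in> space riesz_measure"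
    then show "ennreal (norm (Z x)) = ennreal (Z x)" using Z_ge1[of x] by simp
  qed
  have "integrable riesz_measure Z"
  proof (rule integrableI_bounded)
    show "Z \<in> borel_measurable riesz_measure" by (rule borel_measurable_riesz_measure[OF Z_cont])
    show "(\<integral>\<^sup>+x. ennreal (norm (Z x)) \<partial>riesz_measure) < \<infinity>"
      unfolding Z_nn using nn_integral_weight_le by (simp add: le_less_trans)
  qed
  then have cZ: "integrable riesz_measure (\<lambda>x. c * Z x)" by simp
  have "AE x in riesz_measure. norm (f x) \<le> norm (c * Z x)"
  proof (rule AE_I2)
    fix x assume "x \<in> space riesz_measure"
    then have x: "x \<in> \<Omega>" by simp
    have "norm (c * Z x) = c * Z x" using c(1) Z_ge1[OF x] by (simp add: abs_mult)
    then show "norm (f x) \<le> norm (c * Z x)" using c(2)[OF x] by simp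
  qed
  then show ?thesis
    by (rule Bochner_Integration.integrable_bound[OF cZ borel_measurable_riesz_measure[OF CZ_continuous_on[OF fV]]])
qed

lemma L_truncation_error:
  assumes fV: "f \<in> V" and c: "0 < c" "\<And>x. x \<in> \<Omega> \<Longrightarrow> \<bar>f x\<bar> \<le> c * Z x" and t: "0 \<le> t"
  shows "\<bar>L (\<lambda>x. max (min (f x) t) (- t)) - L f\<bar> \<le> c * L (excess (t / c))"
proof -
  define s where "s = (\<lambda>x. max (min (f x) t) (- t))"
  have sV: "s \<in> V" unfolding s_def by (intro CZ_max CZ_min fV V_const)
  have eV: "(\<lambda>x. c * excess (t / c) x) \<in> V" by (rule CZ_cmult[OF V_excess])
  have pointwise: "\<bar>s x - f x\<bar> \<le> c * excess (t / c) x" if x: "x \<in> \<Omega>" for x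
  proof -
    have "c * (Z x - t / c) \<le> c * excess (t / c) x" using c(1) by (intro mult_left_mono) auto
    moreover have "c * (Z x - t / c) = c * Z x - t" using c(1) by (simp add: field_simps)
    moreover have "0 \<le> c * excess (t / c) x" using c(1) by simp
    ultimately show ?thesis using c(2)[OF x] t by (auto simp: s_def abs_le_iff max_def min_def)
  qed
  have "L s - L f \<le> c * L (excess (t / c))"
    using L_mono[OF CZ_diff[OF sV fV] eV] pointwise L_diff[OF sV fV] L_cmult[OF V_excess]
    by (force simp: abs_le_iff)
  moreover have "L f - L s \<le> c * L (excess (t / c))"
    using L_mono[OF CZ_diff[OF fV sV] eV] pointwise L_diff[OF fV sV] L_cmult[OF V_excess]
    by (force simp: abs_le_iff)
  ultimately show ?thesis unfolding s_def by (simp add: abs_le_iff)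
qed

lemma L_truncation_tendsto:
  assumes fV: "f \<in> V" shows "(\<lambda>n. L (\<lambda>x. max (min (f x) (real n)) (- real n))) \<longlonglongrightarrow> L f"
proof -
  obtain c where c: "0 < c" "\<And>x. x \<in> \<Omega> \<Longrightarrow> \<bar>f x\<bar> \<le> c * Z x"
    using CZ_boundE[OF fV Z_pos] by blast
  have "filterlim (\<lambda>n. (1 / c) * real n) at_top sequentially"
    using c(1) by (intro filterlim_tendsto_pos_mult_at_top[OF tendsto_const _ filterlim_real_sequentially]) simp
  then have "filterlim (\<lambda>n. real n / c) at_top sequentially" by simp
  then have "(\<lambda>n. L (excess (real n / c))) \<longlonglongrightarrow> 0" by (rule filterlim_compose[OF L_tail])
  then have "(\<lambda>n. c * L (excess (real n / c))) \<longlonglongrightarrow> 0" by (rule tendsto_mult_right_zero)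
  then show ?thesis
  proof (rule LIM_zero_cancel[OF Lim_null_comparison, rotated])
    show "\<forall>\<^sub>F n in sequentially. norm (L (\<lambda>x. max (min (f x) (real n)) (- real n)) - L f)
        \<le> c * L (excess (real n / c))"
      using L_truncation_error[OF fV c] by simp
  qed
qed

lemma integral_eq_L: assumes fV: "f \<in> V" shows "integral\<^sup>L riesz_measure f = L f"
proof -
  define s where "s n = (\<lambda>x. max (min (f x) (real n)) (- real n))" for n :: nat
  have sV: "s n \<in> V" for n unfolding s_def by (intro CZ_max CZ_min fV V_const)
  have "\<bar>s n x\<bar> \<le> real n" for n x by (auto simp: s_def)
  then have "integral\<^sup>L riesz_measure (s n) = L (s n)" for n by (rule integral_eq_L_bounded[OF sV])
  then have "(\<lambda>n. integral\<^sup>L riesz_measure (s n)) \<longlonglongrightarrow> L f"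
    using L_truncation_tendsto[OF fV] by (simp add: s_def)
  moreover have "(\<lambda>n. integral\<^sup>L riesz_measure (s n)) \<longlonglongrightarrow> integral\<^sup>L riesz_measure f"
    unfolding s_def by (rule integral_truncation_tendsto[OF integrable_CZ[OF fV]])
  ultimately show ?thesis using LIMSEQ_unique by blast
qed

theorem riesz_representation:
  "riesz_measure \<in> caZ \<Omega> Z" "\<And>f. f \<in> V \<Longrightarrow> pairing f riesz_measure = L f"
proof -
  have "(\<integral>\<^sup>+x. ennreal (Z x) \<partial>riesz_measure) < \<infinity>"
    using nn_integral_weight_le by (simp add: le_less_trans)
  then show "riesz_measure \<in> caZ \<Omega> Z" unfolding caZ_def by simp
  show "pairing f riesz_measure = L f" if "f \<in> V" for f
    unfolding pairing_def by (rule integral_eq_L[OF that])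
qed

end

section \<open>Dual representation of increasing convex functionals\<close>

lemma function_space_CZ: "function_space (CZ \<Omega> Z)"
  by unfold_locales (auto intro: CZ_add CZ_cmult CZ_zero)

lemma subgradient_increasing_convex:
  fixes \<psi> :: "('a::metric_space \<Rightarrow> real) \<Rightarrow> real"
  assumes incr: "\<And>X Y. X \<in> CZ \<Omega> Z \<Longrightarrow> Y \<in> CZ \<Omega> Z \<Longrightarrow> (\<And>x. x \<in> \<Omega> \<Longrightarrow> Y x \<le> X x) \<Longrightarrow> \<psi> Y \<le> \<psi> X"
    and conv: "\<And>X Y l. X \<in> CZ \<Omega> Z \<Longrightarrow> Y \<in> CZ \<Omega> Z \<Longrightarrow> 0 \<le> l \<Longrightarrow> l \<le> 1 \<Longrightarrow>
      \<psi> (\<lambda>x. l * X x + (1 - l) * Y x) \<le> l * \<psi> X + (1 - l) * \<psi> Y"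
    and X: "X \<in> CZ \<Omega> Z"
  obtains q where "\<And>f g. f \<in> CZ \<Omega> Z \<Longrightarrow> g \<in> CZ \<Omega> Z \<Longrightarrow> q (\<lambda>x. f x + g x) = q f + q g"
    and "\<And>f c. f \<in> CZ \<Omega> Z \<Longrightarrow> q (\<lambda>x. c * f x) = c * q f"
    and "\<And>f. f \<in> CZ \<Omega> Z \<Longrightarrow> (\<And>x. x \<in> \<Omega> \<Longrightarrow> 0 \<le> f x) \<Longrightarrow> 0 \<le> q f"
    and "\<And>f. f \<in> CZ \<Omega> Z \<Longrightarrow> q f \<le> \<psi> (\<lambda>x. X x + f x) - \<psi> X"
proof -
  interpret function_space "CZ \<Omega> Z" by (rule function_space_CZ)
  define g where "g f = \<psi> (\<lambda>x. X x + f x) - \<psi> X" for f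
  have "convex_functional g"
    unfolding convex_functional_def
  proof (intro ballI allI impI)
    fix f h and l :: real assume f: "f \<in> CZ \<Omega> Z" and h: "h \<in> CZ \<Omega> Z" and l: "0 \<le> l \<and> l \<le> 1"
    have "(\<lambda>x. X x + (l * f x + (1 - l) * h x)) = (\<lambda>x. l * (X x + f x) + (1 - l) * (X x + h x))"
      by (auto simp: fun_eq_iff algebra_simps)
    then show "g (\<lambda>x. l * f x + (1 - l) * h x) \<le> l * g f + (1 - l) * g h"
      using conv[OF CZ_add[OF X f] CZ_add[OF X h]] l unfolding g_def by (simp add: algebra_simps)
  qed
  moreover have "g (\<lambda>x. 0) = 0" by (simp add: g_def)
  ultimately obtain q where q_add: "\<And>f h. f \<in> CZ \<Omega> Z \<Longrightarrow> h \<in> CZ \<Omega> Z \<Longrightarrow> q (\<lambda>x. f x + h x) = q f + q h"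
    and q_cmult: "\<And>f c. f \<in> CZ \<Omega> Z \<Longrightarrow> q (\<lambda>x. c * f x) = c * q f"
    and q_le: "\<And>f. f \<in> CZ \<Omega> Z \<Longrightarrow> q f \<le> g f"
    using exists_linear_minorant by blast
  have "0 \<le> q f" if f: "f \<in> CZ \<Omega> Z" and nonneg: "\<And>x. x \<in> \<Omega> \<Longrightarrow> 0 \<le> f x" for f
  proof -
    have "- q f = q (\<lambda>x. - f x)" using q_cmult[OF f, of "-1"] by simp
    also have "\<dots> \<le> g (\<lambda>x. - f x)" by (rule q_le[OF CZ_uminus[OF f]])
    also have "\<dots> \<le> 0"
      using incr[OF X CZ_add[OF X CZ_uminus[OF f]]] nonneg by (simp add: g_def)
    finally show ?thesis by simp
  qed
  then show ?thesis using that q_add q_cmult q_le unfolding g_def by blast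
qed

lemma subgradient_tail:
  fixes \<psi> :: "('a::metric_space \<Rightarrow> real) \<Rightarrow> real"
  assumes Z: "continuous_on \<Omega> Z" "\<And>x. x \<in> \<Omega> \<Longrightarrow> 1 \<le> Z x"
    and q_cmult: "\<And>f c. f \<in> CZ \<Omega> Z \<Longrightarrow> q (\<lambda>x. c * f x) = c * q f"
    and q_nonneg: "\<And>f. f \<in> CZ \<Omega> Z \<Longrightarrow> (\<And>x. x \<in> \<Omega> \<Longrightarrow> 0 \<le> f x) \<Longrightarrow> 0 \<le> q f"
    and q_le: "\<And>f. f \<in> CZ \<Omega> Z \<Longrightarrow> q f \<le> \<psi> (\<lambda>x. X x + f x) - \<psi> X"
    and \<epsilon>: "0 < \<epsilon>" and lim: "((\<lambda>z. \<psi> (\<lambda>x. X x + \<epsilon> * max (Z x - z) 0)) \<longlongrightarrow> \<psi> X) at_top"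
  shows "((\<lambda>z. q (\<lambda>x. max (Z x - z) 0)) \<longlongrightarrow> 0) at_top"
proof (rule tendsto_sandwich[OF _ _ tendsto_const])
  have excess: "(\<lambda>x. max (Z x - z) 0) \<in> CZ \<Omega> Z" for z
    using Z by (intro CZ_max CZ_diff CZ_weight CZ_const)
  show "\<forall>\<^sub>F z in at_top. 0 \<le> q (\<lambda>x. max (Z x - z) 0)"
    by (intro always_eventually allI q_nonneg[OF excess]) simp
  show "\<forall>\<^sub>F z in at_top. q (\<lambda>x. max (Z x - z) 0) \<le> (\<psi> (\<lambda>x. X x + \<epsilon> * max (Z x - z) 0) - \<psi> X) / \<epsilon>"
    using q_le[OF CZ_cmult[OF excess]] q_cmult[OF excess] \<epsilon>
    by (intro always_eventually allI) (simp add: le_divide_eq mult.commute)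
  have "((\<lambda>z. (\<psi> (\<lambda>x. X x + \<epsilon> * max (Z x - z) 0) - \<psi> X) / \<epsilon>) \<longlongrightarrow> (\<psi> X - \<psi> X) / \<epsilon>) at_top"
    by (intro tendsto_divide tendsto_diff lim tendsto_const) (use \<epsilon> in simp)
  then show "((\<lambda>z. (\<psi> (\<lambda>x. X x + \<epsilon> * max (Z x - z) 0) - \<psi> X) / \<epsilon>) \<longlongrightarrow> 0) at_top" by simp
qed

lemma conj_CZ_fenchel_young:
  "X \<in> CZ \<Omega> Z \<Longrightarrow> ereal (pairing X \<nu>) - conj_CZ \<Omega> Z \<psi> \<nu> \<le> ereal (\<psi> X)"
  using SUP_upper[of X "CZ \<Omega> Z" "\<lambda>Y. ereal (pairing Y \<nu> - \<psi> Y)"]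
  unfolding conj_CZ_def by (cases "conj_CZ \<Omega> Z \<psi> \<nu>") (auto simp: conj_CZ_def)

lemma conj_CZ_at_maximiser:
  assumes X: "X \<in> CZ \<Omega> Z" and max: "\<And>Y. Y \<in> CZ \<Omega> Z \<Longrightarrow> pairing Y \<mu> - \<psi> Y \<le> pairing X \<mu> - \<psi> X"
  shows "conj_CZ \<Omega> Z \<psi> \<mu> = ereal (pairing X \<mu> - \<psi> X)"
  unfolding conj_CZ_def using X max by (intro antisym SUP_least SUP_upper2[OF X]) auto

theorem theoremA1:
  fixes \<Omega> :: "('j::finite, 't::finite) state set"
    and Z :: "('j, 't) state \<Rightarrow> real"
    and \<psi> :: "(('j, 't) state \<Rightarrow> real) \<Rightarrow> real"
  assumes Omega_sub: "\<Omega> \<subseteq> state_space" and Omega_ne: "\<Omega> \<noteq> {}"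
    and Z_cont: "continuous_on \<Omega> Z" and Z_ge1: "\<forall>\<omega>\<in>\<Omega>. 1 \<le> Z \<omega>"
    and Z_sublevel: "\<forall>z\<ge>0. compact {\<omega>\<in>\<Omega>. Z \<omega> \<le> z}"
    and incr: "\<forall>X\<in>CZ \<Omega> Z. \<forall>Y\<in>CZ \<Omega> Z. (\<forall>\<omega>\<in>\<Omega>. Y \<omega> \<le> X \<omega>) \<longrightarrow> \<psi> Y \<le> \<psi> X"
    and conv: "\<forall>X\<in>CZ \<Omega> Z. \<forall>Y\<in>CZ \<Omega> Z. \<forall>l::real. 0 \<le> l \<and> l \<le> 1 \<longrightarrow>
                 \<psi> (\<lambda>\<omega>. l * X \<omega> + (1 - l) * Y \<omega>) \<le> l * \<psi> X + (1 - l) * \<psi> Y"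
    and cont_below: "\<forall>X\<in>CZ \<Omega> Z. \<exists>\<epsilon>>0.
                 ((\<lambda>z. \<psi> (\<lambda>\<omega>. X \<omega> + \<epsilon> * max (Z \<omega> - z) 0)) \<longlongrightarrow> \<psi> X) at_top"
  shows "\<forall>X\<in>CZ \<Omega> Z. \<exists>\<mu>\<in>caZ \<Omega> Z.
            ereal (\<psi> X) = ereal (pairing X \<mu>) - conj_CZ \<Omega> Z \<psi> \<mu> \<and>
            (\<forall>\<nu>\<in>caZ \<Omega> Z. ereal (pairing X \<nu>) - conj_CZ \<Omega> Z \<psi> \<nu> \<le> ereal (\<psi> X))"
proof
  fix X assume X: "X \<in> CZ \<Omega> Z"
  obtain q where q_add: "\<And>f g. f \<in> CZ \<Omega> Z \<Longrightarrow> g \<in> CZ \<Omega> Z \<Longrightarrow> q (\<lambda>x. f x + g x) = q f + q g"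
    and q_cmult: "\<And>f c. f \<in> CZ \<Omega> Z \<Longrightarrow> q (\<lambda>x. c * f x) = c * q f"
    and q_nonneg: "\<And>f. f \<in> CZ \<Omega> Z \<Longrightarrow> (\<And>x. x \<in> \<Omega> \<Longrightarrow> 0 \<le> f x) \<Longrightarrow> 0 \<le> q f"
    and q_le: "\<And>f. f \<in> CZ \<Omega> Z \<Longrightarrow> q f \<le> \<psi> (\<lambda>x. X x + f x) - \<psi> X"
    using subgradient_increasing_convex[of \<Omega> Z \<psi> X] incr conv X by blast
  obtain \<epsilon> where "0 < \<epsilon>" "((\<lambda>z. \<psi> (\<lambda>\<omega>. X \<omega> + \<epsilon> * max (Z \<omega> - z) 0)) \<longlongrightarrow> \<psi> X) at_top"
    using cont_below X by blast
  then have tail: "((\<lambda>z. q (\<lambda>x. max (Z x - z) 0)) \<longlongrightarrow> 0) at_top"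
    using subgradient_tail[OF Z_cont _ q_cmult q_nonneg q_le] Z_ge1 by blast
  interpret riesz_CZ \<Omega> Z q
    using Z_cont Z_ge1 Z_sublevel q_add q_cmult q_nonneg tail by unfold_locales auto
  have "pairing Y riesz_measure - \<psi> Y \<le> pairing X riesz_measure - \<psi> X" if Y: "Y \<in> CZ \<Omega> Z" for Y
    using q_le[OF CZ_diff[OF Y X]] L_diff[OF Y X] riesz_representation(2)[OF Y]
      riesz_representation(2)[OF X] by simp
  then have "conj_CZ \<Omega> Z \<psi> riesz_measure = ereal (pairing X riesz_measure - \<psi> X)"
    by (rule conj_CZ_at_maximiser[OF X])
  then show "\<exists>\<mu>\<in>caZ \<Omega> Z. ereal (\<psi> X) = ereal (pairing X \<mu>) - conj_CZ \<Omega> Z \<psi> \<mu> \<and>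
      (\<forall>\<nu>\<in>caZ \<Omega> Z. ereal (pairing X \<nu>) - conj_CZ \<Omega> Z \<psi> \<nu> \<le> ereal (\<psi> X))"
    using riesz_representation(1) conj_CZ_fenchel_young[OF X] by (intro bexI[of _ riesz_measure]) auto
qed

end
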